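(* Let $X\subset\mathbb{R}^d$ be a finite point cloud in general position. For every $1\le k<d$, $\mathrm{MSA}^k\subseteq \mathrm{USC}^k$.
   Context: General position: no $d+1$ points of $X$ on a common affine hyperplane, no $d+2$ on a common $(d-1)$-sphere; $\mathsf{DEL}=\mathsf{DEL}(X)$ is the Delaunay complex and $\mathsf{DEL}^k$ its set of $k$-simplices; $\delta(\sigma)$ is the Euclidean diameter. Total orders $\prec$ on $\mathsf{DEL}^k$ are defined recursively: for edges, $\sigma\prec\sigma'$ iff $\delta(\sigma)<\delta(\sigma')$, or $\delta(\sigma)=\delta(\sigma')$ and $\sigma$ precedes $\sigma'$ lexicographically (vertices indexed and sorted increasingly); for $(k+1)$-simplices, $\sigma\prec\sigma'$ iff $\max\partial\sigma\prec\max\partial\sigma'$, or $\max\partial\sigma=\max\partial\sigma'$ and $\sigma$ precedes $\sigma'$ lexicographically, where $\partial\sigma$ is the set of facets and $\max$ is taken w.r.t. $\prec$ on $k$-simplices. A set $S\subseteq\mathsf{DEL}^k$ is a $k$-spanning acycle if, with $L=\mathsf{DEL}^{(k-1)}\cup S$ ($(k-1)$-skeleton plus $S$), $\tilde\beta_k(L)=0$ and $\tilde\beta_{k-1}(L)=0$ (reduced Betti numbers). $\mathrm{MSA}^k$ is the minimum $k$-spanning acycle of $\mathsf{DEL}$ w.r.t. $\prec$: the unique $k$-spanning acycle minimizing $\sum_{\sigma\in S}w(\sigma)$ for any weight $w:\mathsf{DEL}^k\to\mathbb{R}$ strictly increasing along $\prec$ (equivalently, the output of Kruskal's greedy algorithm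 processing $k$-simplices in $\prec$ order). $\mathrm{USC}^k=\{\sigma\in\mathsf{DEL}^k : \sigma\prec\max\partial\tau \text{ for every } (k+1)\text{-simplex } \tau\in\mathsf{DEL} \text{ with } \sigma\subset\tau\}$ (the $k$-dimensional Urquhart simplices). *)

theory Defs
  imports "HOL-Analysis.Analysis"
begin

definition DEL :: "'a::euclidean_space set \<Rightarrow> 'a set set" where
  "DEL X = {\<sigma>. \<sigma> \<noteq> {} \<and> \<sigma> \<subseteq> X \<and>
              (\<exists>y. \<forall>x\<in>\<sigma>. \<forall>z\<in>X. dist y x \<le> dist y z)}"

definition simplices_of_dim :: "'a set set \<Rightarrow> nat \<Rightarrow> 'a set set" where
  "simplices_of_dim K k = {\<sigma>\<in>K. card \<sigma> = Suc k}"

definition skeleton :: "'a set set \<Rightarrow> nat \<Rightarrow> 'a set set" where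
  "skeleton K j = {\<sigma>\<in>K. card \<sigma> \<le> Suc j}"

definition general_position :: "'a::euclidean_space set \<Rightarrow> bool" where
  "general_position X \<longleftrightarrow>
     (\<forall>Y\<subseteq>X. card Y = DIM('a) + 1 \<longrightarrow>
         \<not> (\<exists>a b. a \<noteq> 0 \<and> Y \<subseteq> {x. a \<bullet> x = b})) \<and>
     (\<forall>Y\<subseteq>X. card Y = DIM('a) + 2 \<longrightarrow>
         \<not> (\<exists>c r. r > 0 \<and> Y \<subseteq> sphere c r))"

definition facets :: "'a set \<Rightarrow> 'a set set" where
  "facets \<sigma> = {\<sigma> - {v} | v. v \<in> \<sigma>}"

definition lexless :: "('a \<Rightarrow> nat) \<Rightarrow> 'a set \<Rightarrow> 'a set \<Rightarrow> bool" where
  "lexless \<iota> s t \<longleftrightarrow>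
     (sorted_list_of_set (\<iota> ` s), sorted_list_of_set (\<iota> ` t)) \<in> lexord {(a, b). a < b}"

definition maxf :: "('a set \<Rightarrow> 'a set \<Rightarrow> bool) \<Rightarrow> 'a set \<Rightarrow> 'a set" where
  "maxf R \<sigma> = (THE f. f \<in> facets \<sigma> \<and> (\<forall>g\<in>facets \<sigma>. g \<noteq> f \<longrightarrow> R g f))"

text \<open>prec \<iota> k: the order on k-simplices (k \<ge> 1); level 0 is irrelevant.\<close>
primrec prec :: "('a::euclidean_space \<Rightarrow> nat) \<Rightarrow> nat \<Rightarrow> 'a set \<Rightarrow> 'a set \<Rightarrow> bool" where
  "prec \<iota> 0 = lexless \<iota>"
| "prec \<iota> (Suc k) =
     (if k = 0 then
        (\<lambda>s t. diameter s < diameter t \<or> (diameter s = diameter t \<and> lexless \<iota> s t))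
      else
        (let R = prec \<iota> k in
          (\<lambda>s t. R (maxf R s) (maxf R t) \<or> (maxf R s = maxf R t \<and> lexless \<iota> s t))))"

section \<open>Reduced Z/2 homology of a simplicial complex (chains = finite sets of simplices)\<close>

definition boundary :: "'a set set \<Rightarrow> 'a set set" where
  "boundary C = {f. odd (card {s\<in>C. f \<in> facets s})}"

definition reduced_cycle :: "'a set set \<Rightarrow> nat \<Rightarrow> 'a set set \<Rightarrow> bool" where
  "reduced_cycle K j C \<longleftrightarrow> finite C \<and> C \<subseteq> simplices_of_dim K j \<and>
     (if j = 0 then even (card C) else boundary C = {})"

definition reduced_betti_zero :: "'a set set \<Rightarrow> nat \<Rightarrow> bool" where
  "reduced_betti_zero K j \<longleftrightarrow>
     (\<forall>C. reduced_cycle K j C \<longrightarrow>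
        (\<exists>D. finite D \<and> D \<subseteq> simplices_of_dim K (Suc j) \<and> boundary D = C))"

definition spanning_acycle :: "'a::euclidean_space set \<Rightarrow> nat \<Rightarrow> 'a set set \<Rightarrow> bool" where
  "spanning_acycle X k S \<longleftrightarrow> S \<subseteq> simplices_of_dim (DEL X) k \<and>
     (let L = skeleton (DEL X) (k - 1) \<union> S in
        reduced_betti_zero L k \<and> reduced_betti_zero L (k - 1))"

definition is_MSA :: "('a::euclidean_space \<Rightarrow> nat) \<Rightarrow> 'a set \<Rightarrow> nat \<Rightarrow> 'a set set \<Rightarrow> bool" where
  "is_MSA \<iota> X k S \<longleftrightarrow> spanning_acycle X k S \<and>
     (\<forall>w :: 'a set \<Rightarrow> real.
        (\<forall>s\<in>simplices_of_dim (DEL X) k. \<forall>t\<in>simplices_of_dim (DEL X) k.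
            prec \<iota> k s t \<longrightarrow> w s < w t) \<longrightarrow>
        (\<forall>S'. spanning_acycle X k S' \<longrightarrow> sum w S \<le> sum w S'))"

definition MSA :: "('a::euclidean_space \<Rightarrow> nat) \<Rightarrow> 'a set \<Rightarrow> nat \<Rightarrow> 'a set set" where
  "MSA \<iota> X k = (THE S. is_MSA \<iota> X k S)"

definition USC :: "('a::euclidean_space \<Rightarrow> nat) \<Rightarrow> 'a set \<Rightarrow> nat \<Rightarrow> 'a set set" where
  "USC \<iota> X k = {\<sigma>\<in>simplices_of_dim (DEL X) k.
     \<forall>\<tau>\<in>simplices_of_dim (DEL X) (Suc k). \<sigma> \<subset> \<tau> \<longrightarrow> prec \<iota> k \<sigma> (maxf (prec \<iota> k) \<tau>)}"

end

theory Submission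
  imports Defs
begin

text \<open>Over GF(2) the \<open>k\<close>-spanning acycles of the Delaunay complex are the bases of the
  matroid of boundaries of \<open>k\<close>-simplices, taken relative to the \<open>(k-1)\<close>-cycles, because
  every \<open>(k-1)\<close>-cycle of the Delaunay complex bounds. The minimum spanning acycle is the basis
  that is optimal under single exchanges, and such a basis has the cycle property: were \<open>\<sigma>\<close>
  the largest facet of a \<open>(k+1)\<close>-simplex \<open>\<tau>\<close>, the relation \<open>\<partial>\<partial>\<tau> = 0\<close> would express
  \<open>\<partial>\<sigma>\<close> through smaller facets, one of which could replace \<open>\<sigma>\<close>. Hence every simplex of the
  MSA precedes the largest facet of each of its cofaces.

  Acyclicity of the Delaunay complex comes from the paraboloid lift: it is the complex of faces
  of the lifted points exposed from below. Such complexes of exposed faces are acyclic by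
  induction on the number of points. A cycle is pushed down along the height of a simplex, the
  distance from a fixed point to the slice of its normal cone; the top simplices lie on a single
  face, their boundary lies in a complex of exposed faces of that smaller face, and after filling
  it there the rest is filled by a cone in the full simplex on the face.\<close>

section \<open>Chains over GF(2)\<close>

lemma insert_eq_sym_diff: "s \<notin> C \<Longrightarrow> insert s C = sym_diff {s} C"
  by auto

lemma sym_diff_eq_empty_iff: "sym_diff A B = {} \<longleftrightarrow> A = B"
  by auto

lemma card_sym_diff:
  assumes "finite A" "finite B"
  shows "card (sym_diff A B) + 2 * card (A \<inter> B) = card A + card B"
proof -
  have "card (sym_diff A B) = card (A - B) + card (B - A)"
    by (rule card_Un_disjoint) (use assms in auto)
  moreover have "card (A - B) = card A - card (A \<inter> B)" "card (B - A) = card B - card (A \<inter> B)"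
    using assms by (simp_all add: card_Diff_subset_Int Int_commute)
  moreover have "card (A \<inter> B) \<le> card A" "card (A \<inter> B) \<le> card B"
    using assms by (auto intro: card_mono)
  ultimately show ?thesis by simp
qed

lemma facets_iff: "f \<in> facets s \<longleftrightarrow> (\<exists>v\<in>s. f = s - {v})"
  unfolding facets_def by auto

lemma finite_facets [simp]: "finite s \<Longrightarrow> finite (facets s)"
  by (simp add: facets_def)

lemma facets_subset: "f \<in> facets s \<Longrightarrow> f \<subseteq> s"
  unfolding facets_def by auto

lemma card_facet: "finite s \<Longrightarrow> f \<in> facets s \<Longrightarrow> card f = card s - 1"
  unfolding facets_iff by auto

lemma facets_singleton: "facets {a} = {{}}"
  unfolding facets_def by auto

lemma facets_nonempty: "\<sigma> \<noteq> {} \<Longrightarrow> facets \<sigma> \<noteq> {}"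
  unfolding facets_def by auto

lemma facet_of_card:
  assumes "finite \<tau>" "\<sigma> \<subset> \<tau>" "card \<tau> = Suc (card \<sigma>)"
  shows "\<sigma> \<in> facets \<tau>"
proof -
  obtain v where v: "v \<in> \<tau>" "v \<notin> \<sigma>" using assms(2) by blast
  have "\<sigma> \<subseteq> \<tau> - {v}" "card (\<tau> - {v}) = card \<sigma>" using assms v by auto
  then have "\<sigma> = \<tau> - {v}" using assms(1) by (metis card_subset_eq finite_Diff)
  then show ?thesis unfolding facets_iff using v(1) by blast
qed

lemma boundary_empty [simp]: "boundary {} = {}"
  by (simp add: boundary_def)

lemma boundary_singleton [simp]: "boundary {s} = facets s"
proof -
  have "{s'\<in>{s}. f \<in> facets s'} = (if f \<in> facets s then {s} else {})" for f by auto
  then show ?thesis unfolding boundary_def by auto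
qed

lemma boundary_sym_diff:
  assumes "finite A" "finite B"
  shows "boundary (sym_diff A B) = sym_diff (boundary A) (boundary B)"
proof (rule set_eqI)
  fix f
  let ?A = "{s\<in>A. f \<in> facets s}" and ?B = "{s\<in>B. f \<in> facets s}"
  have "{s\<in>sym_diff A B. f \<in> facets s} = sym_diff ?A ?B" by auto
  moreover have "card (sym_diff ?A ?B) + 2 * card (?A \<inter> ?B) = card ?A + card ?B"
    by (rule card_sym_diff) (use assms in auto)
  then have "odd (card (sym_diff ?A ?B)) \<longleftrightarrow> odd (card ?A) \<noteq> odd (card ?B)"
    by presburger
  ultimately show "f \<in> boundary (sym_diff A B) \<longleftrightarrow> f \<in> sym_diff (boundary A) (boundary B)"
    unfolding boundary_def by auto
qed

lemma boundary_insert: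
  assumes "finite C" "s \<notin> C"
  shows "boundary (insert s C) = sym_diff (facets s) (boundary C)"
  using boundary_sym_diff[of "{s}" C] assms(1) unfolding insert_eq_sym_diff[OF assms(2)] by simp

lemma boundary_remove:
  assumes "finite C" "s \<in> C"
  shows "boundary C = sym_diff (facets s) (boundary (C - {s}))"
  using boundary_insert[of "C - {s}" s] assms by (simp add: insert_absorb)

lemma in_boundary_imp_facet: "f \<in> boundary C \<Longrightarrow> \<exists>s\<in>C. f \<in> facets s"
  unfolding boundary_def by (cases "{s \<in> C. f \<in> facets s} = {}") auto

lemma boundary_avoids_vertex:
  assumes "\<forall>s\<in>C. a \<notin> s"
  shows "\<forall>f\<in>boundary C. a \<notin> f"
proof
  fix f assume "f \<in> boundary C"
  then obtain s where "s \<in> C" "f \<in> facets s" using in_boundary_imp_facet by blast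
  then show "a \<notin> f" using assms facets_subset by blast
qed

lemma finite_boundary [simp]:
  assumes "finite C" "\<forall>s\<in>C. finite s"
  shows "finite (boundary C)"
proof (rule finite_subset)
  show "boundary C \<subseteq> \<Union> (facets ` C)" using in_boundary_imp_facet by blast
qed (use assms in auto)

lemma boundary_vertices:
  assumes "finite C" "\<forall>s\<in>C. card s = 1"
  shows "boundary C = (if even (card C) then {} else {{}})"
proof -
  have "facets s = {{}}" if "s \<in> C" for s
    using assms(2) that by (metis card_1_singletonE facets_singleton)
  then have "{s \<in> C. f \<in> facets s} = (if f = {} then C else {})" for f
    by auto
  then show ?thesis unfolding boundary_def by auto
qed

text \<open>The empty set is the only \<open>(-1)\<close>-simplex, so for \<open>j = 0\<close> the condition
  \<open>boundary C = {}\<close> is the augmentation condition \<open>even (card C)\<close> of reduced homology.\<close>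
definition cycles :: "'x set set \<Rightarrow> nat \<Rightarrow> 'x set set set" where
  "cycles K j = {C. finite C \<and> C \<subseteq> simplices_of_dim K j \<and> boundary C = {}}"

lemma reduced_cycle_iff: "reduced_cycle K j C \<longleftrightarrow> C \<in> cycles K j"
proof (cases "j = 0 \<and> finite C \<and> C \<subseteq> simplices_of_dim K j")
  case True
  then have "\<forall>s\<in>C. card s = 1" unfolding simplices_of_dim_def by auto
  then show ?thesis using True boundary_vertices[of C]
    unfolding reduced_cycle_def cycles_def by auto
qed (auto simp: reduced_cycle_def cycles_def)

lemma reduced_betti_zero_iff:
  "reduced_betti_zero K j \<longleftrightarrow>
    (\<forall>C\<in>cycles K j. \<exists>D. finite D \<and> D \<subseteq> simplices_of_dim K (Suc j) \<and> boundary D = C)"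
  unfolding reduced_betti_zero_def reduced_cycle_iff by blast

lemma simplex_of_dim_finite: "s \<in> simplices_of_dim K j \<Longrightarrow> finite s"
  unfolding simplices_of_dim_def by (auto intro: card_ge_0_finite)

lemma simplices_of_dim_mono: "K \<subseteq> L \<Longrightarrow> simplices_of_dim K j \<subseteq> simplices_of_dim L j"
  unfolding simplices_of_dim_def by blast

definition cone :: "'x \<Rightarrow> 'x set set \<Rightarrow> 'x set set" where
  "cone a C = insert a ` C"

lemma finite_cone [simp]: "finite C \<Longrightarrow> finite (cone a C)"
  unfolding cone_def by simp

lemma facets_insert:
  assumes "a \<notin> s"
  shows "facets (insert a s) = insert s (cone a (facets s))"
proof -
  have "facets (insert a s) = insert (insert a s - {a}) ((\<lambda>v. insert a s - {v}) ` s)"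
    unfolding facets_def by auto
  also have "(\<lambda>v. insert a s - {v}) ` s = insert a ` (\<lambda>v. s - {v}) ` s"
    using assms by (auto simp: image_image insert_Diff_if)
  finally show ?thesis
    using assms unfolding cone_def facets_def by (simp add: setcompr_eq_image)
qed

lemma cone_sym_diff:
  assumes "\<forall>s\<in>A. a \<notin> s" "\<forall>s\<in>B. a \<notin> s"
  shows "cone a (sym_diff A B) = sym_diff (cone a A) (cone a B)"
proof -
  have inj: "inj_on (insert a) (A \<union> B)"
    using assms by (intro inj_onI) (auto simp: insert_ident)
  have "insert a ` (A - B) = insert a ` A - insert a ` B"
    using inj by (rule inj_on_image_set_diff) auto
  moreover have "insert a ` (B - A) = insert a ` B - insert a ` A"
    using inj by (rule inj_on_image_set_diff) auto
  ultimately show ?thesis unfolding cone_def image_Un by simp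
qed

lemma boundary_cone:
  assumes "finite C" "\<forall>s\<in>C. finite s \<and> a \<notin> s"
  shows "boundary (cone a C) = sym_diff C (cone a (boundary C))"
  using assms
proof (induction C rule: finite_induct)
  case empty
  then show ?case by (simp add: cone_def)
next
  case (insert s C)
  have s: "a \<notin> s" using insert.prems by simp
  have free: "\<forall>f\<in>facets s. a \<notin> f" "\<forall>f\<in>boundary C. a \<notin> f"
    using s facets_subset insert.prems by (blast, intro boundary_avoids_vertex) auto
  have new: "insert a s \<notin> cone a C"
    using insert.hyps(2) insert.prems s by (auto simp: cone_def insert_ident)
  have "boundary (cone a (insert s C)) = boundary (insert (insert a s) (cone a C))"
    by (simp add: cone_def)
  also have "\<dots> = sym_diff (facets (insert a s)) (boundary (cone a C))"
    using insert.hyps(1) new by (intro boundary_insert) simp_all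
  also have "\<dots> = sym_diff (insert s (cone a (facets s))) (sym_diff C (cone a (boundary C)))"
    using insert.IH insert.prems by (simp only: facets_insert[OF s]) simp
  also have "\<dots> = sym_diff (insert s C) (sym_diff (cone a (facets s)) (cone a (boundary C)))"
    using insert.hyps(2) s by (auto simp: cone_def)
  also have "\<dots> = sym_diff (insert s C) (cone a (boundary (insert s C)))"
    unfolding boundary_insert[OF insert.hyps] cone_sym_diff[OF free] ..
  finally show ?case .
qed

lemma boundary_facets [simp]:
  assumes "finite s"
  shows "boundary (facets s) = {}"
  using assms
proof (induction s rule: finite_induct)
  case empty
  then show ?case by (simp add: facets_def)
next
  case (insert a s)
  have "s \<notin> cone a (facets s)" using insert.hyps(2) by (auto simp: cone_def)
  moreover have "\<forall>t\<in>facets s. finite t \<and> a \<notin> t"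
    using insert.hyps facets_subset finite_subset by blast
  ultimately have "boundary (facets (insert a s)) =
      sym_diff (facets s) (sym_diff (facets s) (cone a (boundary (facets s))))"
    using insert.hyps by (simp add: facets_insert boundary_insert boundary_cone)
  then show ?case using insert.IH by (simp add: cone_def)
qed

lemma boundary_boundary:
  assumes "finite C" "\<forall>s\<in>C. finite s"
  shows "boundary (boundary C) = {}"
  using assms
proof (induction C rule: finite_induct)
  case (insert s C)
  then have "finite (boundary C)" by simp
  then show ?case
    using insert by (simp add: boundary_insert boundary_sym_diff)
qed simp

definition full_simplex :: "'x set \<Rightarrow> 'x set set" where
  "full_simplex R = {s. s \<noteq> {} \<and> s \<subseteq> R}"

lemma boundary_cone_cycle:
  assumes C: "finite C" "\<forall>s\<in>C. finite s" "boundary C = {}"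
  shows "boundary (cone a {s\<in>C. a \<notin> s}) = C"
proof -
  define C0 where "C0 = {s\<in>C. a \<notin> s}"
  define C1 where "C1 = (\<lambda>s. s - {a}) ` {s\<in>C. a \<in> s}"
  have "cone a C1 = {s\<in>C. a \<in> s}"
    unfolding C1_def cone_def image_image by (auto simp: insert_absorb image_iff)
  then have split: "C = sym_diff C0 (cone a C1)" unfolding C0_def by auto
  have fin01: "finite C0" "finite C1" using C(1) unfolding C0_def C1_def by auto
  have free0: "\<forall>s\<in>C0. finite s \<and> a \<notin> s" using C(2) unfolding C0_def by auto
  have free1: "\<forall>s\<in>C1. finite s \<and> a \<notin> s" using C(2) unfolding C1_def by auto
  have "boundary C = boundary (sym_diff C0 (cone a C1))"
    using split by (rule arg_cong)
  also have "\<dots> = sym_diff (boundary C0) (boundary (cone a C1))"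
    by (rule boundary_sym_diff) (simp_all add: fin01)
  also have "\<dots> = sym_diff (boundary C0) (sym_diff C1 (cone a (boundary C1)))"
    unfolding boundary_cone[OF fin01(2) free1] ..
  finally have cycle: "sym_diff (boundary C0) (sym_diff C1 (cone a (boundary C1))) = {}"
    using C(3) by simp
  have avoid0: "\<forall>f\<in>boundary C0. a \<notin> f"
    by (rule boundary_avoids_vertex) (use free0 in blast)
  have "boundary C0 = C1"
  proof (rule set_eqI)
    fix f
    show "f \<in> boundary C0 \<longleftrightarrow> f \<in> C1"
    proof (cases "a \<in> f")
      case True
      then show ?thesis using avoid0 free1 by blast
    next
      case False
      then have "f \<notin> cone a (boundary C1)" unfolding cone_def by blast
      moreover have "f \<notin> sym_diff (boundary C0) (sym_diff C1 (cone a (boundary C1)))"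
        unfolding cycle by simp
      ultimately show ?thesis by blast
    qed
  qed
  then show ?thesis
    unfolding C0_def[symmetric] boundary_cone[OF fin01(1) free0] using split by simp
qed

lemma full_simplex_cycle_bounds:
  assumes "finite R" "a \<in> R" "C \<in> cycles (full_simplex R) j"
  shows "\<exists>D. finite D \<and> D \<subseteq> simplices_of_dim (full_simplex R) (Suc j) \<and> boundary D = C"
proof -
  let ?D = "cone a {s\<in>C. a \<notin> s}"
  have C: "finite C" "C \<subseteq> simplices_of_dim (full_simplex R) j" "boundary C = {}"
    using assms(3) unfolding cycles_def by auto
  then have "boundary ?D = C" using simplex_of_dim_finite by (intro boundary_cone_cycle) blast+
  moreover have "?D \<subseteq> simplices_of_dim (full_simplex R) (Suc j)"
  proof
    fix t assume "t \<in> ?D"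
    then obtain s where s: "s \<in> C" "a \<notin> s" "t = insert a s" unfolding cone_def by blast
    then have "card s = Suc j" "s \<subseteq> R" "finite s"
      using C(2) simplex_of_dim_finite unfolding simplices_of_dim_def full_simplex_def by auto
    then show "t \<in> simplices_of_dim (full_simplex R) (Suc j)"
      using s assms(2) unfolding simplices_of_dim_def full_simplex_def by auto
  qed
  moreover have "finite ?D" using C(1) by simp
  ultimately show ?thesis by blast
qed

lemma full_simplex_acyclic:
  assumes "finite R" "R \<noteq> {}"
  shows "reduced_betti_zero (full_simplex R) j"
proof -
  obtain a where "a \<in> R" using assms(2) by blast
  then show ?thesis
    using full_simplex_cycle_bounds[OF assms(1)] unfolding reduced_betti_zero_iff by blast
qed

section \<open>Acyclicity of upper complexes\<close>

definition upper_complex :: "('b \<Rightarrow> 'c::euclidean_space) \<Rightarrow> 'b set \<Rightarrow> 'c \<Rightarrow> 'b set set" where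
  "upper_complex e P v = {\<sigma>. \<sigma> \<noteq> {} \<and> \<sigma> \<subseteq> P \<and>
     (\<exists>u. 0 < inner u v \<and> (\<forall>x\<in>\<sigma>. \<forall>w\<in>P. inner u (e w) \<le> inner u (e x)))}"

definition normal_slice :: "('b \<Rightarrow> 'c::euclidean_space) \<Rightarrow> 'b set \<Rightarrow> 'c \<Rightarrow> 'b set \<Rightarrow> 'c set" where
  "normal_slice e P v \<sigma> = {u. inner u v = 1 \<and> (\<forall>x\<in>\<sigma>. \<forall>w\<in>P. inner u (e w) \<le> inner u (e x))}"

definition foot :: "'c::euclidean_space \<Rightarrow> 'c" where
  "foot v = v /\<^sub>R inner v v"

definition nearest_normal :: "('b \<Rightarrow> 'c::euclidean_space) \<Rightarrow> 'b set \<Rightarrow> 'c \<Rightarrow> 'b set \<Rightarrow> 'c" where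
  "nearest_normal e P v \<sigma> = closest_point (normal_slice e P v \<sigma>) (foot v)"

definition normal_dist :: "('b \<Rightarrow> 'c::euclidean_space) \<Rightarrow> 'b set \<Rightarrow> 'c \<Rightarrow> 'b set \<Rightarrow> real" where
  "normal_dist e P v \<sigma> = dist (foot v) (nearest_normal e P v \<sigma>)"

definition maximizers :: "('b \<Rightarrow> 'c::euclidean_space) \<Rightarrow> 'b set \<Rightarrow> 'c \<Rightarrow> 'b set" where
  "maximizers e P z = {w\<in>P. \<forall>w'\<in>P. inner z (e w') \<le> inner z (e w)}"

text \<open>For \<open>u \<bottom> v\<close> we have \<open>inner u (link_dir v z) = inner u (foot v - z)\<close>: the faces of
  \<open>maximizers e P z\<close> exposed in this direction are those whose normal slice contains points
  closer to \<open>foot v\<close> than \<open>z\<close>.\<close>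
definition link_dir :: "'c::euclidean_space \<Rightarrow> 'c \<Rightarrow> 'c" where
  "link_dir v z = (foot v - z) - inner z (foot v - z) *\<^sub>R v"

lemma finite_upper_complex: "finite P \<Longrightarrow> finite (upper_complex e P v)"
  by (rule finite_subset[of _ "Pow P"]) (auto simp: upper_complex_def)

lemma upper_complex_singleton:
  assumes "finite P" "P \<noteq> {}" "v \<noteq> 0"
  obtains w where "w \<in> P" "{w} \<in> upper_complex e P v"
proof -
  let ?h = "\<lambda>w. inner v (e w)"
  obtain w where "is_arg_min (\<lambda>w. - ?h w) (\<lambda>w. w \<in> P) w"
    using ex_is_arg_min_if_finite[OF assms(1,2)] by blast
  then have w: "w \<in> P" "\<forall>w'\<in>P. ?h w' \<le> ?h w" unfolding is_arg_min_def by auto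
  then have "{w} \<in> upper_complex e P v"
    unfolding upper_complex_def using assms(3) by (auto intro!: exI[of _ v])
  then show thesis using w(1) that by blast
qed

lemma inner_foot: "v \<noteq> 0 \<Longrightarrow> inner (foot v) v = 1"
  unfolding foot_def by simp

lemma normal_slice_eq_Int:
  "normal_slice e P v \<sigma> = {u. inner v u = 1} \<inter> (\<Inter>x\<in>\<sigma>. \<Inter>w\<in>P. {u. inner (e w - e x) u \<le> 0})"
  unfolding normal_slice_def by (auto simp: inner_commute inner_diff_left inner_diff_right)

lemma closed_normal_slice: "closed (normal_slice e P v \<sigma>)"
  unfolding normal_slice_eq_Int by (auto intro!: closed_Int closed_INT closed_hyperplane closed_halfspace_le)

lemma convex_normal_slice: "convex (normal_slice e P v \<sigma>)"
  unfolding normal_slice_eq_Int by (auto intro!: convex_Int convex_INT convex_hyperplane convex_halfspace_le)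

lemma normal_slice_nonempty: "\<sigma> \<in> upper_complex e P v \<Longrightarrow> normal_slice e P v \<sigma> \<noteq> {}"
proof -
  assume "\<sigma> \<in> upper_complex e P v"
  then obtain u where u: "0 < inner u v" "\<forall>x\<in>\<sigma>. \<forall>w\<in>P. inner u (e w) \<le> inner u (e x)"
    unfolding upper_complex_def by blast
  then have "(1 / inner u v) *\<^sub>R u \<in> normal_slice e P v \<sigma>"
    unfolding normal_slice_def by (auto intro: divide_right_mono)
  then show ?thesis by blast
qed

lemma normal_slice_antimono: "\<tau> \<subseteq> \<sigma> \<Longrightarrow> normal_slice e P v \<sigma> \<subseteq> normal_slice e P v \<tau>"
  unfolding normal_slice_def by blast

lemma nearest_normal_in:
  "\<sigma> \<in> upper_complex e P v \<Longrightarrow> nearest_normal e P v \<sigma> \<in> normal_slice e P v \<sigma>"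
  unfolding nearest_normal_def by (rule closest_point_in_set[OF closed_normal_slice normal_slice_nonempty])

lemma normal_dist_le: "y \<in> normal_slice e P v \<sigma> \<Longrightarrow> normal_dist e P v \<sigma> \<le> dist (foot v) y"
  unfolding normal_dist_def nearest_normal_def by (rule closest_point_le[OF closed_normal_slice])

lemma nearest_normal_unique:
  assumes "y \<in> normal_slice e P v \<sigma>" "dist (foot v) y \<le> normal_dist e P v \<sigma>"
  shows "nearest_normal e P v \<sigma> = y"
proof -
  have "\<forall>z\<in>normal_slice e P v \<sigma>. dist (foot v) y \<le> dist (foot v) z"
    using assms normal_dist_le by (meson order_trans)
  then show ?thesis unfolding nearest_normal_def
    using closest_point_unique[OF convex_normal_slice closed_normal_slice assms(1)] by metis
qed

lemma normal_dist_mono: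
  assumes "\<sigma> \<in> upper_complex e P v" "\<tau> \<subseteq> \<sigma>"
  shows "normal_dist e P v \<tau> \<le> normal_dist e P v \<sigma>"
    and "normal_dist e P v \<tau> = normal_dist e P v \<sigma> \<Longrightarrow> nearest_normal e P v \<tau> = nearest_normal e P v \<sigma>"
proof -
  have z: "nearest_normal e P v \<sigma> \<in> normal_slice e P v \<tau>"
    using nearest_normal_in[OF assms(1)] normal_slice_antimono[OF assms(2)] by blast
  then show "normal_dist e P v \<tau> \<le> normal_dist e P v \<sigma>"
    using normal_dist_le unfolding normal_dist_def by blast
  assume "normal_dist e P v \<tau> = normal_dist e P v \<sigma>"
  then show "nearest_normal e P v \<tau> = nearest_normal e P v \<sigma>"
    using nearest_normal_unique[OF z] unfolding normal_dist_def by simp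
qed

lemma maximizers_subset: "maximizers e P z \<subseteq> P"
  unfolding maximizers_def by blast

lemma maximizers_level:
  "x \<in> maximizers e P z \<Longrightarrow> w \<in> maximizers e P z \<Longrightarrow> inner z (e w) = inner z (e x)"
  unfolding maximizers_def by (auto intro!: order_antisym)

lemma subset_maximizers_nearest:
  "\<sigma> \<in> upper_complex e P v \<Longrightarrow> \<sigma> \<subseteq> maximizers e P (nearest_normal e P v \<sigma>)"
  using nearest_normal_in[of \<sigma> e P v] unfolding normal_slice_def maximizers_def upper_complex_def by blast

lemma maximizers_nearest_neq:
  assumes "\<sigma> \<in> upper_complex e P v" "P \<notin> upper_complex e P v"
  shows "maximizers e P (nearest_normal e P v \<sigma>) \<noteq> P"
proof
  let ?z = "nearest_normal e P v \<sigma>"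
  assume "maximizers e P ?z = P"
  then have "\<forall>x\<in>P. \<forall>w\<in>P. inner ?z (e w) \<le> inner ?z (e x)" unfolding maximizers_def by blast
  moreover have "inner ?z v = 1" using nearest_normal_in[OF assms(1)] unfolding normal_slice_def by blast
  moreover have "P \<noteq> {}" using assms(1) unfolding upper_complex_def by blast
  ultimately have "P \<in> upper_complex e P v" unfolding upper_complex_def by (auto intro!: exI[of _ ?z])
  then show False using assms(2) by blast
qed

lemma subset_maximizers_upper_complex:
  assumes "inner z v = 1" "\<tau> \<noteq> {}" "\<tau> \<subseteq> maximizers e P z"
  shows "\<tau> \<in> upper_complex e P v" "z \<in> normal_slice e P v \<tau>"
proof -
  have "\<forall>x\<in>\<tau>. \<forall>w\<in>P. inner z (e w) \<le> inner z (e x)" using assms(3) unfolding maximizers_def by blast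
  then show "\<tau> \<in> upper_complex e P v" "z \<in> normal_slice e P v \<tau>"
    using assms maximizers_subset[of e P z] unfolding upper_complex_def normal_slice_def
    by (auto intro!: exI[of _ z])
qed

lemma inner_link_dir: "inner (u - inner u v *\<^sub>R z) (foot v - z) = inner u (link_dir v z)"
  unfolding link_dir_def by (simp add: inner_diff_left inner_diff_right algebra_simps)

lemma link_dir_nonzero:
  assumes "v \<noteq> 0" "inner z v = 1" "z \<noteq> foot v"
  shows "link_dir v z \<noteq> 0"
proof
  define c where "c = inner z (foot v - z)"
  assume "link_dir v z = 0"
  then have eq: "foot v - z = c *\<^sub>R v" unfolding link_dir_def c_def by simp
  have "inner (foot v - z) v = 0" using inner_foot[OF assms(1)] assms(2) by (simp add: inner_diff_left)
  then have "c * inner v v = 0" unfolding eq by simp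
  then have "foot v - z = 0" using assms(1) eq by simp
  then show False using assms(3) by simp
qed

lemma normal_slice_perturb:
  assumes "finite P" "inner z v = 1" "\<tau> \<subseteq> maximizers e P z" "inner u v = 0"
    and u: "\<forall>x\<in>\<tau>. \<forall>w\<in>maximizers e P z. inner u (e w) \<le> inner u (e x)"
  obtains t where "0 < t" "z + t *\<^sub>R u \<in> normal_slice e P v \<tau>"
proof -
  let ?g = "\<lambda>t w x. inner (z + t *\<^sub>R u) (e w) - inner (z + t *\<^sub>R u) (e x)"
  have "finite \<tau>" using assms(1,3) maximizers_subset finite_subset by metis
  then have "\<forall>\<^sub>F t in at_right (0::real). \<forall>x\<in>\<tau>. \<forall>w\<in>P. ?g t w x \<le> 0"
  proof (intro eventually_ball_finite assms(1) ballI)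
    fix x w assume x: "x \<in> \<tau>" and w: "w \<in> P"
    show "\<forall>\<^sub>F t in at_right 0. ?g t w x \<le> 0"
    proof (cases "w \<in> maximizers e P z")
      case True
      then have "\<forall>t>0. ?g t w x \<le> 0"
        using u x maximizers_level[of x e P z w] assms(3)
        by (auto simp: inner_add_left mult_left_mono)
      then show ?thesis using eventually_at_right_less[of 0] by (auto elim: eventually_mono)
    next
      case False
      then obtain w' where "w' \<in> P" "inner z (e w) < inner z (e w')"
        using w unfolding maximizers_def by force
      moreover have "inner z (e w') \<le> inner z (e x)"
        using x assms(3) \<open>w' \<in> P\<close> unfolding maximizers_def by blast
      ultimately have "?g 0 w x < 0" by simp
      moreover have "(\<lambda>t. ?g t w x) \<midarrow>0\<rightarrow> ?g 0 w x"
        by (intro tendsto_intros)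
      ultimately have "\<forall>\<^sub>F t in at_right 0. ?g t w x < 0"
        using order_tendstoD(2) tendsto_mono[OF at_le[OF subset_UNIV]] by blast
      then show ?thesis by (auto elim: eventually_mono)
    qed
  qed
  then have "\<forall>\<^sub>F t in at_right (0::real). 0 < t \<and> (\<forall>x\<in>\<tau>. \<forall>w\<in>P. ?g t w x \<le> 0)"
    using eventually_at_right_less eventually_conj by blast
  then obtain t where "0 < t" "\<forall>x\<in>\<tau>. \<forall>w\<in>P. ?g t w x \<le> 0"
    using eventually_happens'[OF trivial_limit_at_right_real] by blast
  moreover have "inner (z + t *\<^sub>R u) v = 1" using assms(2,4) by (simp add: inner_add_left)
  ultimately show thesis using that unfolding normal_slice_def by auto
qed

lemma nearest_normal_eq_if_not_link:
  assumes "inner z v = 1" "\<tau> \<noteq> {}" "\<tau> \<subseteq> maximizers e P z"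
    and not_link: "\<tau> \<notin> upper_complex e (maximizers e P z) (link_dir v z)"
  shows "nearest_normal e P v \<tau> = z"
proof (rule nearest_normal_unique)
  show z: "z \<in> normal_slice e P v \<tau>" by (rule subset_maximizers_upper_complex[OF assms(1-3)])
  have "dist (foot v) z \<le> dist (foot v) y" if y: "y \<in> normal_slice e P v \<tau>" for y
  proof -
    define u where "u = y - z"
    have uv: "inner u v = 0"
      using y assms(1) unfolding u_def normal_slice_def by (simp add: inner_diff_left)
    have "\<forall>x\<in>\<tau>. \<forall>w\<in>maximizers e P z. inner u (e w) \<le> inner u (e x)"
    proof (intro ballI)
      fix x w assume x: "x \<in> \<tau>" and w: "w \<in> maximizers e P z"
      have "inner y (e w) \<le> inner y (e x)"
        using y x w maximizers_subset[of e P z] unfolding normal_slice_def by blast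
      moreover have "inner z (e w) = inner z (e x)" using maximizers_level[OF _ w] x assms(3) by blast
      ultimately show "inner u (e w) \<le> inner u (e x)" unfolding u_def by (simp add: inner_diff_left)
    qed
    then have "\<not> 0 < inner u (link_dir v z)"
      using not_link assms(2,3) unfolding upper_complex_def by blast
    then have le: "inner u (foot v - z) \<le> 0" using inner_link_dir[of u v z] uv by simp
    have "(dist (foot v) y)\<^sup>2 = (norm ((foot v - z) - u))\<^sup>2"
      unfolding u_def dist_norm by (simp add: algebra_simps)
    also have "\<dots> = (dist (foot v) z)\<^sup>2 - 2 * inner u (foot v - z) + (norm u)\<^sup>2"
      by (simp add: dist_norm power2_norm_eq_inner inner_diff_left inner_diff_right inner_commute)
    finally have "(dist (foot v) z)\<^sup>2 \<le> (dist (foot v) y)\<^sup>2"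
      using le zero_le_power2[of "norm u"] by linarith
    then show ?thesis by (rule power2_le_imp_le) simp
  qed
  then show "dist (foot v) z \<le> normal_dist e P v \<tau>"
    using nearest_normal_in[OF subset_maximizers_upper_complex(1)[OF assms(1-3)]]
    unfolding normal_dist_def by blast
qed

lemma not_link_if_nearest_normal_eq:
  assumes "finite P" "inner z v = 1" "\<tau> \<subseteq> maximizers e P z"
    and nearest: "nearest_normal e P v \<tau> = z"
  shows "\<tau> \<notin> upper_complex e (maximizers e P z) (link_dir v z)"
proof
  assume "\<tau> \<in> upper_complex e (maximizers e P z) (link_dir v z)"
  then obtain u where u: "0 < inner u (link_dir v z)"
    "\<forall>x\<in>\<tau>. \<forall>w\<in>maximizers e P z. inner u (e w) \<le> inner u (e x)"
    unfolding upper_complex_def by blast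
  define u' where "u' = u - inner u v *\<^sub>R z"
  have "inner u' v = 0" unfolding u'_def using assms(2) by (simp add: inner_diff_left)
  moreover have "\<forall>x\<in>\<tau>. \<forall>w\<in>maximizers e P z. inner u' (e w) \<le> inner u' (e x)"
  proof (intro ballI)
    fix x w assume x: "x \<in> \<tau>" and w: "w \<in> maximizers e P z"
    have "inner z (e w) = inner z (e x)" using maximizers_level[OF _ w] x assms(3) by blast
    then show "inner u' (e w) \<le> inner u' (e x)"
      using u(2) x w unfolding u'_def by (simp add: inner_diff_left)
  qed
  ultimately obtain t where t: "0 < t" "z + t *\<^sub>R u' \<in> normal_slice e P v \<tau>"
    using normal_slice_perturb[OF assms(1-3)] by blast
  have "inner (foot v - z) ((z + t *\<^sub>R u') - z) \<le> 0"
    using closest_point_dot[OF convex_normal_slice closed_normal_slice t(2), of "foot v"] nearest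
    unfolding nearest_normal_def by simp
  also have "inner (foot v - z) ((z + t *\<^sub>R u') - z) = t * inner u (link_dir v z)"
    using inner_link_dir[of u v z] unfolding u'_def by (simp add: inner_commute)
  finally show False using t(1) u(1) by (simp add: mult_le_0_iff)
qed

text \<open>One step of the descent on cycles of an upper complex: the simplices \<open>C_top\<close> of a cycle
  whose nearest normal is the point \<open>z\<close> of maximal distance all live on the face
  \<open>maximizers e P z\<close>, and their boundary lies in the smaller upper complex \<open>link\<close> of that
  face. Filling it there and then in the full simplex on the face trades \<open>C_top\<close> for
  simplices of smaller \<open>normal_dist\<close>.\<close>
locale top_cells =
  fixes e :: "'b \<Rightarrow> 'c::euclidean_space" and P :: "'b set" and v :: 'c
    and j :: nat and C :: "'b set set" and \<sigma>0 :: "'b set"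
  assumes finite_P: "finite P" and v_nonzero: "v \<noteq> 0"
    and not_full: "P \<notin> upper_complex e P v"
    and cycle: "C \<in> cycles (upper_complex e P v) j"
    and top_in: "\<sigma>0 \<in> C"
    and top_max: "\<forall>\<tau>\<in>C. normal_dist e P v \<tau> \<le> normal_dist e P v \<sigma>0"
begin

abbreviation "K \<equiv> upper_complex e P v"

definition "z = nearest_normal e P v \<sigma>0"
definition "face = maximizers e P z"
definition "link = upper_complex e face (link_dir v z)"
definition "C_top = {\<tau>\<in>C. nearest_normal e P v \<tau> = z}"

lemma cycle_props: "finite C" "C \<subseteq> simplices_of_dim K j" "C \<subseteq> K" "boundary C = {}"
  using cycle unfolding cycles_def simplices_of_dim_def by auto

lemma top_in_K: "\<sigma>0 \<in> K"
  using top_in cycle_props by blast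

lemma z_props: "inner z v = 1" "\<sigma>0 \<subseteq> face" "normal_dist e P v \<sigma>0 = dist (foot v) z"
  using nearest_normal_in[OF top_in_K] subset_maximizers_nearest[OF top_in_K]
  unfolding z_def face_def normal_dist_def normal_slice_def by auto

lemma face_props: "finite face" "face \<noteq> {}" "card face < card P"
proof -
  have "face \<subseteq> P" "face \<noteq> P"
    using maximizers_subset maximizers_nearest_neq[OF top_in_K not_full] unfolding face_def z_def
    by simp_all
  then show "finite face" "card face < card P"
    using finite_subset[OF _ finite_P] psubset_card_mono[OF finite_P] by auto
  have "\<sigma>0 \<noteq> {}" using top_in_K unfolding upper_complex_def by simp
  then show "face \<noteq> {}" using z_props(2) by blast
qed

lemma full_simplex_face_subset: "full_simplex face \<subseteq> K"
proof
  fix s assume "s \<in> full_simplex face"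
  then show "s \<in> K"
    by (intro subset_maximizers_upper_complex(1)[OF z_props(1)]) (auto simp: full_simplex_def face_def)
qed

lemma C_top_subset: "C_top \<subseteq> C" "\<sigma>0 \<in> C_top"
  using top_in unfolding C_top_def z_def by auto

lemma C_top_on_face:
  assumes "\<tau> \<in> C_top"
  shows "\<tau> \<noteq> {}" "\<tau> \<subseteq> face" "\<tau> \<notin> link"
proof -
  have \<tau>: "\<tau> \<in> K" "nearest_normal e P v \<tau> = z" using assms cycle_props unfolding C_top_def by auto
  then show "\<tau> \<noteq> {}" "\<tau> \<subseteq> face"
    using subset_maximizers_nearest[OF \<tau>(1)] unfolding face_def upper_complex_def by auto
  then show "\<tau> \<notin> link"
    using not_link_if_nearest_normal_eq[OF finite_P z_props(1)] \<tau>(2) unfolding link_def face_def by blast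
qed

lemma boundary_C_top_in_link:
  assumes f: "f \<in> boundary C_top" "f \<noteq> {}"
  shows "f \<in> link"
proof (rule ccontr)
  assume "f \<notin> link"
  obtain \<tau> where \<tau>: "\<tau> \<in> C_top" "f \<in> facets \<tau>" using in_boundary_imp_facet[OF f(1)] by blast
  have "f \<subseteq> face" using facets_subset[OF \<tau>(2)] C_top_on_face(2)[OF \<tau>(1)] by blast
  then have f_z: "nearest_normal e P v f = z"
    using nearest_normal_eq_if_not_link[OF z_props(1) f(2)] \<open>f \<notin> link\<close> unfolding link_def face_def by blast
  have fin: "finite C_top" "finite (C - C_top)"
    using rev_finite_subset[OF cycle_props(1) C_top_subset(1)] cycle_props(1) by auto
  have "C = sym_diff C_top (C - C_top)" using C_top_subset(1) by blast
  then have "boundary C = boundary (sym_diff C_top (C - C_top))" by (rule arg_cong)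
  also have "\<dots> = sym_diff (boundary C_top) (boundary (C - C_top))"
    using fin by (rule boundary_sym_diff)
  finally have "sym_diff (boundary C_top) (boundary (C - C_top)) = {}"
    using cycle_props(4) by simp
  then have "f \<in> boundary (C - C_top)" using f(1) unfolding sym_diff_eq_empty_iff by simp
  then obtain \<tau>' where \<tau>': "\<tau>' \<in> C - C_top" "f \<in> facets \<tau>'" using in_boundary_imp_facet by blast
  have "\<tau>' \<in> K" using \<tau>'(1) cycle_props(3) by blast
  have "normal_dist e P v \<sigma>0 = normal_dist e P v f" using z_props(3) f_z unfolding normal_dist_def by simp
  also have "\<dots> \<le> normal_dist e P v \<tau>'" using normal_dist_mono(1)[OF \<open>\<tau>' \<in> K\<close> facets_subset[OF \<tau>'(2)]] .
  finally have "normal_dist e P v f = normal_dist e P v \<tau>'"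
    using top_max \<tau>'(1) \<open>normal_dist e P v \<sigma>0 = normal_dist e P v f\<close> by fastforce
  then have "nearest_normal e P v \<tau>' = z"
    using normal_dist_mono(2)[OF \<open>\<tau>' \<in> K\<close> facets_subset[OF \<tau>'(2)]] f_z by simp
  then show False using \<tau>'(1) unfolding C_top_def by blast
qed

lemma link_below_top:
  assumes "d \<in> link"
  shows "d \<in> K" "normal_dist e P v d < normal_dist e P v \<sigma>0"
proof -
  have d: "d \<noteq> {}" "d \<subseteq> face" using assms unfolding link_def upper_complex_def by auto
  then show "d \<in> K" using full_simplex_face_subset unfolding full_simplex_def by blast
  have "z \<in> normal_slice e P v d"
    using subset_maximizers_upper_complex(2)[OF z_props(1) d[unfolded face_def]] .
  then have le: "normal_dist e P v d \<le> normal_dist e P v \<sigma>0" using normal_dist_le z_props(3) by metis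
  show "normal_dist e P v d < normal_dist e P v \<sigma>0"
  proof (rule ccontr)
    assume "\<not> ?thesis"
    then have "nearest_normal e P v d = z"
      using nearest_normal_unique[OF \<open>z \<in> normal_slice e P v d\<close>] le z_props(3) by simp
    then show False
      using not_link_if_nearest_normal_eq[OF finite_P z_props(1)] d assms unfolding link_def face_def by blast
  qed
qed

lemma top_away_from_foot:
  assumes "boundary C_top \<noteq> {}"
  shows "z \<noteq> foot v"
proof
  assume z: "z = foot v"
  have "nearest_normal e P v \<tau> = z" if "\<tau> \<in> C" for \<tau>
  proof -
    have "normal_dist e P v \<tau> \<le> 0" using top_max that z_props(3) z by simp
    then show ?thesis using z unfolding normal_dist_def by simp
  qed
  then have "C_top = C" unfolding C_top_def by blast
  then show False using assms cycle_props(4) by simp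
qed

lemma boundary_C_top_cycle:
  assumes "j = Suc i"
  shows "boundary C_top \<in> cycles link i"
proof -
  have fin: "finite C_top" "\<forall>s\<in>C_top. finite s"
    using rev_finite_subset[OF cycle_props(1) C_top_subset(1)] cycle_props(2) C_top_subset(1)
      simplex_of_dim_finite by blast+
  have "f \<in> simplices_of_dim link i" if f: "f \<in> boundary C_top" for f
  proof -
    obtain \<tau> where \<tau>: "\<tau> \<in> C_top" "f \<in> facets \<tau>" using in_boundary_imp_facet[OF f] by blast
    have "card \<tau> = Suc (Suc i)"
      using \<tau>(1) C_top_subset(1) cycle_props(2) assms unfolding simplices_of_dim_def by auto
    then have "card f = Suc i" using card_facet[OF _ \<tau>(2)] fin(2) \<tau>(1) by simp
    then have "f \<noteq> {}" by auto
    then show ?thesis using boundary_C_top_in_link[OF f] \<open>card f = Suc i\<close>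
      unfolding simplices_of_dim_def by simp
  qed
  then show ?thesis using fin boundary_boundary unfolding cycles_def by auto
qed

lemma link_filling:
  assumes link_acyclic: "link_dir v z \<noteq> 0 \<Longrightarrow> \<forall>i. reduced_betti_zero link i"
  obtains D where "finite D" "D \<subseteq> simplices_of_dim link j" "boundary D = boundary C_top"
proof (cases "boundary C_top = {}")
  case True
  then show thesis using that[of "{}"] by simp
next
  case False
  have dir: "link_dir v z \<noteq> 0"
    using link_dir_nonzero[OF v_nonzero z_props(1) top_away_from_foot[OF False]] .
  show thesis
  proof (cases j)
    case 0
    have "finite C_top" "\<forall>s\<in>C_top. card s = 1"
      using rev_finite_subset[OF cycle_props(1) C_top_subset(1)] C_top_subset(1) cycle_props(2) 0
      unfolding simplices_of_dim_def by auto
    then have "boundary C_top = (if even (card C_top) then {} else {{}})" by (rule boundary_vertices)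
    then have "boundary C_top = {{}}" using False by (simp split: if_split_asm)
    moreover obtain w where "{w} \<in> link"
      using upper_complex_singleton[OF face_props(1,2) dir] unfolding link_def by blast
    ultimately show thesis using that[of "{{w}}"] 0 by (simp add: facets_singleton simplices_of_dim_def)
  next
    case (Suc i)
    have "reduced_betti_zero link i" using link_acyclic[OF dir] by blast
    then obtain D where "finite D" "D \<subseteq> simplices_of_dim link (Suc i)" "boundary D = boundary C_top"
      using boundary_C_top_cycle[OF Suc] unfolding reduced_betti_zero_iff by blast
    then show thesis using that[unfolded Suc] by blast
  qed
qed

lemma cycle_reduction:
  assumes "link_dir v z \<noteq> 0 \<Longrightarrow> \<forall>i. reduced_betti_zero link i"
  obtains F where "finite F" "F \<subseteq> simplices_of_dim K (Suc j)"
    "sym_diff C (boundary F) \<in> cycles K j" "sym_diff C (boundary F) - (C - C_top) \<subseteq> link"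
proof -
  obtain D where D: "finite D" "D \<subseteq> simplices_of_dim link j" "boundary D = boundary C_top"
    using link_filling[OF assms] by blast
  have fin_top: "finite C_top" using rev_finite_subset[OF cycle_props(1) C_top_subset(1)] .
  have "link \<subseteq> full_simplex face" unfolding link_def upper_complex_def full_simplex_def by blast
  then have "D \<subseteq> simplices_of_dim (full_simplex face) j" using D(2) simplices_of_dim_mono by blast
  moreover have "C_top \<subseteq> simplices_of_dim (full_simplex face) j"
    using C_top_on_face C_top_subset(1) cycle_props(2)
    unfolding simplices_of_dim_def full_simplex_def by blast
  moreover have "boundary (sym_diff C_top D) = {}"
    using boundary_sym_diff[OF fin_top D(1)] D(3) by simp
  ultimately have E: "sym_diff C_top D \<in> cycles (full_simplex face) j"
    using fin_top D(1) unfolding cycles_def by auto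
  obtain a where "a \<in> face" using face_props(2) by blast
  then obtain F where F: "finite F" "F \<subseteq> simplices_of_dim (full_simplex face) (Suc j)"
    "boundary F = sym_diff C_top D"
    using full_simplex_cycle_bounds[OF face_props(1) _ E] by blast
  have to_K: "simplices_of_dim (full_simplex face) i \<subseteq> simplices_of_dim K i" for i
    using simplices_of_dim_mono[OF full_simplex_face_subset] .
  have E_K: "sym_diff C_top D \<subseteq> simplices_of_dim K j" using E to_K unfolding cycles_def by blast
  have "boundary (sym_diff C (sym_diff C_top D)) = {}"
    using boundary_sym_diff[of C "sym_diff C_top D"] cycle_props(1,4) fin_top D(1) E
    unfolding cycles_def by simp
  then have "sym_diff C (boundary F) \<in> cycles K j"
    using E_K cycle_props(1,2) fin_top D(1) unfolding F(3) cycles_def by auto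
  moreover have "sym_diff C (boundary F) - (C - C_top) \<subseteq> link"
    using D(2) C_top_subset(1) unfolding F(3) simplices_of_dim_def by blast
  ultimately show thesis using that F(1,2) to_K by blast
qed

end

lemma sum_power_less_power:
  fixes B :: nat
  assumes "finite D" "card D < B" "\<forall>d\<in>D. r d < R"
  shows "(\<Sum>d\<in>D. B ^ r d) < B ^ R"
proof (cases "D = {}")
  case True
  then show ?thesis using assms(2) by simp
next
  case False
  then have "0 < R" using assms(3) by auto
  have "(\<Sum>d\<in>D. B ^ r d) \<le> (\<Sum>d\<in>D. B ^ (R - 1))"
    using assms(2,3) by (intro sum_mono power_increasing) auto
  also have "\<dots> = card D * B ^ (R - 1)" by simp
  also have "\<dots> < B * B ^ (R - 1)" using assms(2) by simp
  also have "\<dots> = B ^ R" using \<open>0 < R\<close> by (simp add: power_eq_if)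
  finally show ?thesis .
qed

text \<open>Written in base \<open>card K + 1\<close>, the digits of \<open>height_weight K h C\<close> count the simplices of
  \<open>C\<close> of each height, so it compares height profiles lexicographically from the top.\<close>
definition height_weight :: "'x set \<Rightarrow> ('x \<Rightarrow> real) \<Rightarrow> 'x set \<Rightarrow> nat" where
  "height_weight K h C = (\<Sum>\<tau>\<in>C. Suc (card K) ^ card {t\<in>K. h t < h \<tau>})"

lemma height_weight_less:
  assumes "finite K" "finite C" "finite C'" "T \<subseteq> C" "\<sigma>0 \<in> T"
    and lower: "C' - (C - T) \<subseteq> {t\<in>K. h t < h \<sigma>0}"
  shows "height_weight K h C' < height_weight K h C"
proof -
  let ?w = "\<lambda>\<tau>. Suc (card K) ^ card {t\<in>K. h t < h \<tau>}"
  have "card {t\<in>K. h t < h d} < card {t\<in>K. h t < h \<sigma>0}" if "d \<in> C' - (C - T)" for d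
  proof (rule psubset_card_mono)
    have "d \<in> K" "h d < h \<sigma>0" using lower that by auto
    then show "{t\<in>K. h t < h d} \<subset> {t\<in>K. h t < h \<sigma>0}" by auto
  qed (use assms(1) in simp)
  moreover have "card (C' - (C - T)) \<le> card K"
    using card_mono[OF assms(1)] lower by blast
  ultimately have low: "sum ?w (C' - (C - T)) < ?w \<sigma>0"
    using assms(3) by (intro sum_power_less_power) simp_all
  have fin: "finite (C - T)" "finite T" using assms(2,4) finite_subset by auto
  have "sum ?w C' \<le> sum ?w ((C - T) \<union> (C' - (C - T)))"
    using fin assms(3) by (intro sum_mono2) auto
  also have "\<dots> = sum ?w (C - T) + sum ?w (C' - (C - T))"
    using fin assms(3) by (intro sum.union_disjoint) auto
  also have "\<dots> < sum ?w (C - T) + ?w \<sigma>0" using low by simp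
  also have "\<dots> \<le> sum ?w (C - T) + sum ?w T"
    using fin(2) assms(5) by (intro add_left_mono member_le_sum) auto
  also have "\<dots> = sum ?w C" by (rule sum.subset_diff[OF assms(4,2), symmetric])
  finally show ?thesis unfolding height_weight_def .
qed

lemma upper_complex_cycle_bounds:
  assumes P: "finite P" "v \<noteq> 0" "P \<notin> upper_complex e P v"
    and smaller: "\<And>Q w. card Q < card P \<Longrightarrow> finite Q \<Longrightarrow> Q \<noteq> {} \<Longrightarrow> w \<noteq> 0 \<Longrightarrow>
      \<forall>i. reduced_betti_zero (upper_complex e Q w) i"
    and "C \<in> cycles (upper_complex e P v) j"
  shows "\<exists>D. finite D \<and> D \<subseteq> simplices_of_dim (upper_complex e P v) (Suc j) \<and> boundary D = C"
  using assms(5)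
proof (induction "height_weight (upper_complex e P v) (normal_dist e P v) C" arbitrary: C
    rule: less_induct)
  case less
  let ?K = "upper_complex e P v" and ?h = "normal_dist e P v"
  show ?case
  proof (cases "C = {}")
    case True
    then show ?thesis by (intro exI[of _ "{}"]) simp
  next
    case False
    have "finite C" using less.prems unfolding cycles_def by simp
    then obtain \<sigma>0 where "is_arg_min (\<lambda>\<tau>. - ?h \<tau>) (\<lambda>\<tau>. \<tau> \<in> C) \<sigma>0"
      using ex_is_arg_min_if_finite[OF _ False] by blast
    then have "\<sigma>0 \<in> C" "\<forall>\<tau>\<in>C. ?h \<tau> \<le> ?h \<sigma>0" unfolding is_arg_min_def by auto
    then interpret top_cells e P v j C \<sigma>0
      using less.prems P by unfold_locales simp_all
    obtain F where F: "finite F" "F \<subseteq> simplices_of_dim ?K (Suc j)"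
      "sym_diff C (boundary F) \<in> cycles ?K j" "sym_diff C (boundary F) - (C - C_top) \<subseteq> link"
      using cycle_reduction smaller[OF face_props(3,1,2)] unfolding link_def by blast
    have "height_weight ?K ?h (sym_diff C (boundary F)) < height_weight ?K ?h C"
      using F(3,4) link_below_top C_top_subset finite_upper_complex[OF P(1)] cycle_props(1)
      unfolding cycles_def by (intro height_weight_less) auto
    then obtain G where G: "finite G" "G \<subseteq> simplices_of_dim ?K (Suc j)"
      "boundary G = sym_diff C (boundary F)"
      using less.hyps[OF _ F(3)] by blast
    then have "boundary (sym_diff G F) = C" using boundary_sym_diff[OF G(1) F(1)] by auto
    then show ?thesis using G(1,2) F(1,2) by (intro exI[of _ "sym_diff G F"]) auto
  qed
qed

theorem upper_complex_acyclic:
  fixes e :: "'b \<Rightarrow> 'c::euclidean_space"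
  assumes "finite P" "P \<noteq> {}" "v \<noteq> 0"
  shows "reduced_betti_zero (upper_complex e P v) j"
proof -
  have "\<forall>j. reduced_betti_zero (upper_complex e P v) j"
    using assms
  proof (induction "card P" arbitrary: P v rule: less_induct)
    case less
    show ?case
    proof (cases "P \<in> upper_complex e P v")
      case True
      then have "upper_complex e P v = full_simplex P"
        unfolding upper_complex_def full_simplex_def by blast
      then show ?thesis using full_simplex_acyclic[OF less.prems(1,2)] by auto
    next
      case False
      then show ?thesis
        using upper_complex_cycle_bounds[OF less.prems(1,3) False less.hyps]
        unfolding reduced_betti_zero_iff by blast
    qed
  qed
  then show ?thesis by blast
qed

section \<open>The Delaunay complex\<close>

lemma dist_le_iff_inner:
  fixes y x w :: "'a::euclidean_space"
  shows "dist y x \<le> dist y w \<longleftrightarrow> 2 * inner y w - inner w w \<le> 2 * inner y x - inner x x"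
proof -
  have sq: "(dist y p)\<^sup>2 = inner y y - 2 * inner y p + inner p p" for p :: 'a
    by (simp add: dist_norm power2_norm_eq_inner inner_diff_left inner_diff_right inner_commute)
  have "dist y x \<le> dist y w \<longleftrightarrow> (dist y x)\<^sup>2 \<le> (dist y w)\<^sup>2"
    by (simp add: abs_le_square_iff[symmetric])
  also have "\<dots> \<longleftrightarrow> 2 * inner y w - inner w w \<le> 2 * inner y x - inner x x"
    unfolding sq by linarith
  finally show ?thesis .
qed

definition lift :: "'a::euclidean_space \<Rightarrow> 'a \<times> real" where
  "lift x = (x, inner x x)"

text \<open>Nearest points to \<open>y\<close> are the maximizers of \<open>(2 y, -1)\<close> on the lifted points, so the
  Delaunay complex consists of the faces of the lifted point set exposed from below.\<close>
lemma DEL_eq_upper_complex: "DEL X = upper_complex lift X (0, -1)"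
proof (rule set_eqI, rule iffI)
  fix \<sigma> assume "\<sigma> \<in> DEL X"
  then obtain y where s: "\<sigma> \<noteq> {}" "\<sigma> \<subseteq> X" and y: "\<forall>x\<in>\<sigma>. \<forall>z\<in>X. dist y x \<le> dist y z"
    unfolding DEL_def by blast
  have "\<forall>x\<in>\<sigma>. \<forall>w\<in>X. inner (2 *\<^sub>R y, -1) (lift w) \<le> inner (2 *\<^sub>R y, -1) (lift x)"
    using y unfolding lift_def dist_le_iff_inner by simp
  then show "\<sigma> \<in> upper_complex lift X (0, -1)"
    unfolding upper_complex_def using s by (intro CollectI conjI exI[of _ "(2 *\<^sub>R y, -1)"]) simp_all
next
  fix \<sigma> assume "\<sigma> \<in> upper_complex lift X (0, -1)"
  then obtain a b where s: "\<sigma> \<noteq> {}" "\<sigma> \<subseteq> X" and b: "b < 0"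
    and ineq: "\<forall>x\<in>\<sigma>. \<forall>w\<in>X. inner (a, b) (lift w) \<le> inner (a, b) (lift x)"
    unfolding upper_complex_def by force
  define y where "y = (1 / (- 2 * b)) *\<^sub>R a"
  have "dist y x \<le> dist y w" if "x \<in> \<sigma>" "w \<in> X" for x w
  proof -
    have lifted: "(inner a p + b * inner p p) / (- b) = 2 * inner y p - inner p p" for p
      unfolding y_def using b by (simp add: field_simps)
    have "inner a w + b * inner w w \<le> inner a x + b * inner x x"
      using ineq that unfolding lift_def by simp
    then have "(inner a w + b * inner w w) / (- b) \<le> (inner a x + b * inner x x) / (- b)"
      using b by (intro divide_right_mono) auto
    then show ?thesis unfolding dist_le_iff_inner lifted .
  qed
  then show "\<sigma> \<in> DEL X" unfolding DEL_def using s by blast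
qed

lemma DEL_acyclic:
  assumes "finite X"
  shows "reduced_betti_zero (DEL X) j"
proof (cases "X = {}")
  case True
  then have "DEL X = {}" unfolding DEL_def by auto
  then show ?thesis unfolding reduced_betti_zero_iff cycles_def simplices_of_dim_def by auto
next
  case False
  have "(0::'a, -1::real) \<noteq> 0" by (simp add: zero_prod_def)
  then show ?thesis unfolding DEL_eq_upper_complex using upper_complex_acyclic[OF assms False] by blast
qed

lemma finite_DEL: "finite X \<Longrightarrow> finite (DEL X)"
  by (rule finite_subset[of _ "Pow X"]) (auto simp: DEL_def)

lemma DEL_simplex_subset: "\<sigma> \<in> DEL X \<Longrightarrow> \<sigma> \<subseteq> X"
  unfolding DEL_def by blast

lemma finite_simplices_of_dim_DEL: "finite X \<Longrightarrow> finite (simplices_of_dim (DEL X) k)"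
  unfolding simplices_of_dim_def using finite_DEL[of X] by simp

lemma facets_simplices_of_dim_DEL:
  assumes "\<sigma> \<in> simplices_of_dim (DEL X) (Suc k)"
  shows "facets \<sigma> \<subseteq> simplices_of_dim (DEL X) k"
proof
  fix f assume f: "f \<in> facets \<sigma>"
  have \<sigma>: "\<sigma> \<in> DEL X" "card \<sigma> = Suc (Suc k)" "finite \<sigma>"
    using assms simplex_of_dim_finite unfolding simplices_of_dim_def by auto
  then have "card f = Suc k" using card_facet[OF _ f] by simp
  moreover have "f \<in> DEL X"
    using \<sigma>(1) facets_subset[OF f] \<open>card f = Suc k\<close> unfolding DEL_def by force
  ultimately show "f \<in> simplices_of_dim (DEL X) k" unfolding simplices_of_dim_def by simp
qed

section \<open>The total orders on simplices\<close>

definition strict_total_on :: "'x set \<Rightarrow> ('x \<Rightarrow> 'x \<Rightarrow> bool) \<Rightarrow> bool" where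
  "strict_total_on A R \<longleftrightarrow> irreflp_on A R \<and> transp_on A R \<and> totalp_on A R"

lemma strict_total_onD:
  assumes "strict_total_on A R"
  shows "s \<in> A \<Longrightarrow> \<not> R s s"
    and "s \<in> A \<Longrightarrow> t \<in> A \<Longrightarrow> u \<in> A \<Longrightarrow> R s t \<Longrightarrow> R t u \<Longrightarrow> R s u"
    and "s \<in> A \<Longrightarrow> t \<in> A \<Longrightarrow> s \<noteq> t \<Longrightarrow> R s t \<or> R t s"
    and "s \<in> A \<Longrightarrow> t \<in> A \<Longrightarrow> R s t \<Longrightarrow> \<not> R t s"
  using assms unfolding strict_total_on_def
  by (auto dest: irreflp_onD transp_onD totalp_onD)

lemma strict_total_on_subset: "strict_total_on A R \<Longrightarrow> B \<subseteq> A \<Longrightarrow> strict_total_on B R"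
  unfolding strict_total_on_def using irreflp_on_subset transp_on_subset totalp_on_subset by blast

lemma strict_total_on_has_max:
  assumes "finite F" "F \<noteq> {}" "strict_total_on F R"
  shows "\<exists>m\<in>F. \<forall>g\<in>F. g \<noteq> m \<longrightarrow> R g m"
  using assms
proof (induction F rule: finite_ne_induct)
  case (singleton x)
  then show ?case by simp
next
  case (insert x F)
  note st = strict_total_onD[OF insert.prems]
  have "strict_total_on F R" using strict_total_on_subset[OF insert.prems] by blast
  then obtain m where m: "m \<in> F" "\<forall>g\<in>F. g \<noteq> m \<longrightarrow> R g m" using insert.IH by blast
  show ?case
  proof (cases "R m x")
    case True
    have "R g x" if "g \<in> F" for g
    proof (cases "g = m")
      case False
      then show ?thesis using st(2)[of g m x] m that True by simp
    qed (use True in simp)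
    then show ?thesis by blast
  next
    case False
    moreover have "x \<noteq> m" using m(1) insert.hyps by blast
    ultimately have "R x m" using st(3)[of x m] m(1) by simp
    then show ?thesis using m by blast
  qed
qed

lemma maxf_facets:
  assumes "finite \<sigma>" "\<sigma> \<noteq> {}" "strict_total_on (facets \<sigma>) R"
  shows "maxf R \<sigma> \<in> facets \<sigma>" "\<And>g. g \<in> facets \<sigma> \<Longrightarrow> g \<noteq> maxf R \<sigma> \<Longrightarrow> R g (maxf R \<sigma>)"
proof -
  obtain m where m: "m \<in> facets \<sigma>" "\<forall>g\<in>facets \<sigma>. g \<noteq> m \<longrightarrow> R g m"
    using strict_total_on_has_max[OF finite_facets[OF assms(1)] facets_nonempty[OF assms(2)] assms(3)]
    by blast
  have "maxf R \<sigma> = m" unfolding maxf_def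
  proof (rule the_equality)
    show "m \<in> facets \<sigma> \<and> (\<forall>g\<in>facets \<sigma>. g \<noteq> m \<longrightarrow> R g m)" using m by blast
  next
    fix f assume "f \<in> facets \<sigma> \<and> (\<forall>g\<in>facets \<sigma>. g \<noteq> f \<longrightarrow> R g f)"
    then show "f = m" using m strict_total_onD(4)[OF assms(3)] by blast
  qed
  then show "maxf R \<sigma> \<in> facets \<sigma>" "\<And>g. g \<in> facets \<sigma> \<Longrightarrow> g \<noteq> maxf R \<sigma> \<Longrightarrow> R g (maxf R \<sigma>)"
    using m by auto
qed

lemma strict_total_on_lexless:
  assumes "inj_on \<iota> X"
  shows "strict_total_on {s. s \<subseteq> X \<and> finite s} (lexless \<iota>)"
  unfolding strict_total_on_def
proof (intro conjI irreflp_onI transp_onI totalp_onI)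
  let ?r = "{(a, b). (a::nat) < b}"
  fix s t u assume s: "s \<in> {s. s \<subseteq> X \<and> finite s}" and t: "t \<in> {s. s \<subseteq> X \<and> finite s}"
  show "\<not> lexless \<iota> s s" unfolding lexless_def by (simp add: lexord_irreflexive)
  show "lexless \<iota> s t \<Longrightarrow> lexless \<iota> t u \<Longrightarrow> lexless \<iota> s u"
    unfolding lexless_def by (rule lexord_trans) (auto simp: trans_def)
  assume "s \<noteq> t"
  then have "\<iota> ` s \<noteq> \<iota> ` t" using inj_on_image_eq_iff[OF assms] s t by blast
  then have "sorted_list_of_set (\<iota> ` s) \<noteq> sorted_list_of_set (\<iota> ` t)"
    using s t by (metis finite_imageI mem_Collect_eq set_sorted_list_of_set)
  then show "lexless \<iota> s t \<or> lexless \<iota> t s"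
    unfolding lexless_def
    using lexord_linear[of ?r "sorted_list_of_set (\<iota> ` s)" "sorted_list_of_set (\<iota> ` t)"]
    by (auto simp: linorder_less_linear)
qed

lemma strict_total_on_lex:
  assumes "strict_total_on (g ` A) R" "strict_total_on A L"
  shows "strict_total_on A (\<lambda>s t. R (g s) (g t) \<or> (g s = g t \<and> L s t))"
  unfolding strict_total_on_def
proof (intro conjI irreflp_onI transp_onI totalp_onI)
  note R = strict_total_onD[OF assms(1)] and L = strict_total_onD[OF assms(2)]
  fix s t u assume s: "s \<in> A" and t: "t \<in> A" and u: "u \<in> A"
  show "\<not> (R (g s) (g s) \<or> (g s = g s \<and> L s s))" using R(1)[of "g s"] L(1) s by blast
  show "R (g s) (g t) \<or> (g s = g t \<and> L s t) \<Longrightarrow> R (g t) (g u) \<or> (g t = g u \<and> L t u) \<Longrightarrow>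
    R (g s) (g u) \<or> (g s = g u \<and> L s u)"
    using R(2)[of "g s" "g t" "g u"] L(2)[OF s t u] s t u by auto
  show "s \<noteq> t \<Longrightarrow> (R (g s) (g t) \<or> (g s = g t \<and> L s t)) \<or> (R (g t) (g s) \<or> (g t = g s \<and> L t s))"
    using R(3)[of "g s" "g t"] L(3)[OF s t] s t by (cases "g s = g t") auto
qed

lemma strict_total_on_less: "strict_total_on A ((<) :: 'a::linorder \<Rightarrow> 'a \<Rightarrow> bool)"
  unfolding strict_total_on_def irreflp_on_def transp_on_def totalp_on_def by auto

lemma simplices_of_dim_DEL_subset: "simplices_of_dim (DEL X) m \<subseteq> {s. s \<subseteq> X \<and> finite s}"
proof
  fix s assume s: "s \<in> simplices_of_dim (DEL X) m"
  then have "s \<in> DEL X" unfolding simplices_of_dim_def by simp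
  then show "s \<in> {s. s \<subseteq> X \<and> finite s}"
    using DEL_simplex_subset simplex_of_dim_finite[OF s] by simp
qed

lemma strict_total_on_prec:
  assumes "finite X" "inj_on \<iota> X" "1 \<le> k"
  shows "strict_total_on (simplices_of_dim (DEL X) k) (prec \<iota> k)"
proof -
  have lex: "strict_total_on (simplices_of_dim (DEL X) m) (lexless \<iota>)" for m
    by (rule strict_total_on_subset[OF strict_total_on_lexless[OF assms(2)] simplices_of_dim_DEL_subset])
  have "strict_total_on (simplices_of_dim (DEL X) (Suc m)) (prec \<iota> (Suc m))" for m
  proof (induction m)
    case 0
    have "prec \<iota> (Suc 0) = (\<lambda>s t. diameter s < diameter t \<or> (diameter s = diameter t \<and> lexless \<iota> s t))"
      by simp
    then show ?case using strict_total_on_lex[OF strict_total_on_less lex] by simp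
  next
    case (Suc m)
    let ?R = "prec \<iota> (Suc m)"
    have "maxf ?R s \<in> simplices_of_dim (DEL X) (Suc m)"
      if s: "s \<in> simplices_of_dim (DEL X) (Suc (Suc m))" for s
    proof -
      have facets: "facets s \<subseteq> simplices_of_dim (DEL X) (Suc m)"
        by (rule facets_simplices_of_dim_DEL[OF s])
      have "finite s" "s \<noteq> {}"
        using s simplex_of_dim_finite[OF s] unfolding simplices_of_dim_def by auto
      then have "maxf ?R s \<in> facets s"
        using maxf_facets(1) strict_total_on_subset[OF Suc facets] by blast
      then show ?thesis using facets by blast
    qed
    then have "strict_total_on (maxf ?R ` simplices_of_dim (DEL X) (Suc (Suc m))) ?R"
      by (intro strict_total_on_subset[OF Suc]) blast
    moreover have "prec \<iota> (Suc (Suc m)) =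
        (\<lambda>s t. ?R (maxf ?R s) (maxf ?R t) \<or> (maxf ?R s = maxf ?R t \<and> lexless \<iota> s t))"
      by (simp add: Let_def)
    ultimately show ?case using strict_total_on_lex[OF _ lex] by (simp only:)
  qed
  moreover obtain m where "k = Suc m" using assms(3) by (cases k) auto
  ultimately show ?thesis by simp
qed

section \<open>Spanning acycles as bases of a matroid over GF(2)\<close>

definition boundary_span :: "'x set set \<Rightarrow> 'x set set set" where
  "boundary_span T = {boundary B | B. B \<subseteq> T}"

definition boundary_independent :: "'x set set \<Rightarrow> bool" where
  "boundary_independent S \<longleftrightarrow> (\<forall>C\<subseteq>S. boundary C = {} \<longrightarrow> C = {})"

definition boundary_basis :: "'x set set \<Rightarrow> 'x set set set \<Rightarrow> 'x set set \<Rightarrow> bool" where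
  "boundary_basis E Z S \<longleftrightarrow> S \<subseteq> E \<and> boundary_independent S \<and> Z \<subseteq> boundary_span S"

definition exchange_optimal ::
    "'x set set \<Rightarrow> 'x set set set \<Rightarrow> ('x set \<Rightarrow> 'x set \<Rightarrow> bool) \<Rightarrow> 'x set set \<Rightarrow> bool" where
  "exchange_optimal E Z R S \<longleftrightarrow>
     (\<forall>\<sigma>\<in>S. \<forall>\<tau>\<in>E - S. boundary_basis E Z (insert \<tau> (S - {\<sigma>})) \<longrightarrow> R \<sigma> \<tau>)"

lemma boundary_spanI: "B \<subseteq> T \<Longrightarrow> a = boundary B \<Longrightarrow> a \<in> boundary_span T"
  unfolding boundary_span_def by auto

lemma boundary_spanE:
  "a \<in> boundary_span T \<Longrightarrow> (\<And>B. B \<subseteq> T \<Longrightarrow> a = boundary B \<Longrightarrow> thesis) \<Longrightarrow> thesis"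
  unfolding boundary_span_def by auto

lemma facets_in_boundary_span: "\<sigma> \<in> T \<Longrightarrow> facets \<sigma> \<in> boundary_span T"
  by (rule boundary_spanI[of "{\<sigma>}"]) simp_all

lemma boundary_span_mono: "T \<subseteq> T' \<Longrightarrow> boundary_span T \<subseteq> boundary_span T'"
  unfolding boundary_span_def by auto

lemma sym_diff_in_boundary_span:
  assumes "finite T" "a \<in> boundary_span T" "b \<in> boundary_span T"
  shows "sym_diff a b \<in> boundary_span T"
proof -
  obtain A B where A: "A \<subseteq> T" "a = boundary A" and B: "B \<subseteq> T" "b = boundary B"
    using assms(2,3) by (meson boundary_spanE)
  have "finite A" "finite B" using A(1) B(1) assms(1) by (auto intro: finite_subset)
  then have "sym_diff a b = boundary (sym_diff A B)" unfolding A(2) B(2) by (simp add: boundary_sym_diff)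
  then show ?thesis using A(1) B(1) by (intro boundary_spanI[of "sym_diff A B"]) auto
qed

lemma boundary_in_boundary_span:
  assumes "finite T" "finite C" "\<forall>\<sigma>\<in>C. facets \<sigma> \<in> boundary_span T"
  shows "boundary C \<in> boundary_span T"
  using assms(2,3)
proof (induction C rule: finite_induct)
  case empty
  then show ?case by (intro boundary_spanI[of "{}"]) simp_all
next
  case (insert s C)
  then show ?case by (simp add: boundary_insert sym_diff_in_boundary_span[OF assms(1)])
qed

lemma boundary_span_insert:
  assumes "finite T" "facets \<sigma> \<in> boundary_span T"
  shows "boundary_span (insert \<sigma> T) = boundary_span T"
proof
  show "boundary_span (insert \<sigma> T) \<subseteq> boundary_span T"
  proof
    fix a assume "a \<in> boundary_span (insert \<sigma> T)"
    then obtain B where B: "B \<subseteq> insert \<sigma> T" "a = boundary B" by (rule boundary_spanE)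
    then have "finite B" using assms(1) by (auto intro: finite_subset)
    show "a \<in> boundary_span T"
    proof (cases "\<sigma> \<in> B")
      case False
      then show ?thesis using B by (intro boundary_spanI[of B]) auto
    next
      case True
      have "boundary (B - {\<sigma>}) \<in> boundary_span T" using B(1) by (intro boundary_spanI) auto
      then show ?thesis
        using boundary_remove[OF \<open>finite B\<close> True] B(2) sym_diff_in_boundary_span[OF assms] by simp
    qed
  qed
qed (rule boundary_span_mono, blast)

lemma boundary_independentD:
  "boundary_independent S \<Longrightarrow> C \<subseteq> S \<Longrightarrow> boundary C = {} \<Longrightarrow> C = {}"
  unfolding boundary_independent_def by blast

lemma boundary_independent_inj:
  assumes "boundary_independent S" "finite S" "B1 \<subseteq> S" "B2 \<subseteq> S" "boundary B1 = boundary B2"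
  shows "B1 = B2"
proof -
  have "finite B1" "finite B2" using assms(2-4) by (auto intro: finite_subset)
  then have "boundary (sym_diff B1 B2) = sym_diff (boundary B1) (boundary B2)"
    by (rule boundary_sym_diff)
  then have "boundary (sym_diff B1 B2) = {}" using assms(5) by simp
  moreover have "sym_diff B1 B2 \<subseteq> S" using assms(3,4) by blast
  ultimately have "sym_diff B1 B2 = {}" using boundary_independentD[OF assms(1)] by blast
  then show ?thesis by auto
qed

lemma facets_notin_boundary_span_remove:
  assumes "boundary_independent S" "finite S" "\<sigma> \<in> S"
  shows "facets \<sigma> \<notin> boundary_span (S - {\<sigma>})"
proof
  assume "facets \<sigma> \<in> boundary_span (S - {\<sigma>})"
  then obtain B where B: "B \<subseteq> S - {\<sigma>}" "facets \<sigma> = boundary B" by (rule boundary_spanE)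
  then have "{\<sigma>} = B" using boundary_independent_inj[OF assms(1,2), of "{\<sigma>}" B] assms(3) by auto
  then show False using B(1) by auto
qed

lemma boundary_independent_insert:
  assumes "boundary_independent S" "finite S" "facets \<tau> \<notin> boundary_span S"
  shows "boundary_independent (insert \<tau> S)"
  unfolding boundary_independent_def
proof (intro allI impI)
  fix C assume C: "C \<subseteq> insert \<tau> S" "boundary C = {}"
  have "finite C" using C(1) assms(2) by (auto intro: finite_subset)
  show "C = {}"
  proof (cases "\<tau> \<in> C")
    case True
    then have "facets \<tau> = boundary (C - {\<tau>})"
      using boundary_remove[OF \<open>finite C\<close> True] C(2) by auto
    then have "facets \<tau> \<in> boundary_span S" using C(1) by (intro boundary_spanI) auto
    then show ?thesis using assms(3) by simp
  next
    case False
    then show ?thesis using boundary_independentD[OF assms(1)] C by blast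
  qed
qed

lemma boundary_basis_exchange:
  assumes "finite E" "boundary_basis E Z S" "\<sigma> \<in> S" "\<tau> \<in> E" "\<tau> \<notin> S"
    and "facets \<tau> \<in> Z" and new: "facets \<tau> \<notin> boundary_span (S - {\<sigma>})"
  shows "boundary_basis E Z (insert \<tau> (S - {\<sigma>}))"
proof -
  let ?S' = "insert \<tau> (S - {\<sigma>})"
  have S: "S \<subseteq> E" "boundary_independent S" "Z \<subseteq> boundary_span S"
    using assms(2) unfolding boundary_basis_def by auto
  have "finite S" using S(1) assms(1) by (rule finite_subset)
  have indep: "boundary_independent ?S'"
    by (rule boundary_independent_insert[OF _ _ new])
      (use S(2) \<open>finite S\<close> in \<open>auto simp: boundary_independent_def\<close>)
  have "facets \<tau> \<in> boundary_span S" using assms(6) S(3) by blast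
  then obtain B where B: "B \<subseteq> S" "facets \<tau> = boundary B" by (rule boundary_spanE)
  have "\<sigma> \<in> B"
  proof (rule ccontr)
    assume "\<sigma> \<notin> B"
    then have "B \<subseteq> S - {\<sigma>}" using B(1) by blast
    then show False using new boundary_spanI[OF _ B(2)] by blast
  qed
  have "finite B" using B(1) \<open>finite S\<close> by (rule finite_subset)
  have "boundary (insert \<tau> (B - {\<sigma>})) = sym_diff (facets \<tau>) (boundary (B - {\<sigma>}))"
    using \<open>finite B\<close> B(1) assms(5) by (intro boundary_insert) auto
  also have "\<dots> = facets \<sigma>"
    unfolding B(2) boundary_remove[OF \<open>finite B\<close> \<open>\<sigma> \<in> B\<close>] by auto
  finally have "facets \<sigma> \<in> boundary_span ?S'"
    using B(1) by (intro boundary_spanI[of "insert \<tau> (B - {\<sigma>})"]) auto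
  then have "boundary_span (insert \<sigma> ?S') = boundary_span ?S'"
    using \<open>finite S\<close> by (intro boundary_span_insert) auto
  moreover have "boundary_span S \<subseteq> boundary_span (insert \<sigma> ?S')" by (rule boundary_span_mono) auto
  ultimately show ?thesis using S(1,3) assms(4) indep unfolding boundary_basis_def by auto
qed

lemma boundary_basis_subset_eq:
  assumes "finite E" "\<forall>\<sigma>\<in>E. facets \<sigma> \<in> Z" "boundary_basis E Z S" "boundary_basis E Z S'" "S' \<subseteq> S"
  shows "S' = S"
proof (rule ccontr)
  assume "S' \<noteq> S"
  then obtain \<sigma> where \<sigma>: "\<sigma> \<in> S" "\<sigma> \<notin> S'" using assms(5) by blast
  have S: "S \<subseteq> E" "boundary_independent S" using assms(3) unfolding boundary_basis_def by auto
  have "facets \<sigma> \<in> boundary_span S'" using assms(2,4) \<sigma>(1) S(1) unfolding boundary_basis_def by blast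
  also have "boundary_span S' \<subseteq> boundary_span (S - {\<sigma>})" using assms(5) \<sigma> by (intro boundary_span_mono) auto
  finally show False
    using facets_notin_boundary_span_remove[OF S(2) finite_subset[OF S(1) assms(1)] \<sigma>(1)] by simp
qed

lemma boundary_basis_symmetric_exchange:
  assumes E: "finite E" "\<forall>\<sigma>\<in>E. facets \<sigma> \<in> Z"
    and S: "boundary_basis E Z S" "boundary_basis E Z S'" and \<tau>: "\<tau> \<in> S'" "\<tau> \<notin> S"
  obtains \<sigma> where "\<sigma> \<in> S" "\<sigma> \<notin> S'"
    "boundary_basis E Z (insert \<sigma> (S' - {\<tau>}))" "boundary_basis E Z (insert \<tau> (S - {\<sigma>}))"
proof -
  have S0: "S \<subseteq> E" "boundary_independent S" "Z \<subseteq> boundary_span S"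
    and S1: "S' \<subseteq> E" "boundary_independent S'"
    using S unfolding boundary_basis_def by auto
  have fin: "finite S" "finite S'" using S0(1) S1(1) E(1) finite_subset by auto
  have "\<tau> \<in> E" using \<tau>(1) S1(1) by blast
  then have "facets \<tau> \<in> boundary_span S" using E(2) S0(3) by blast
  then obtain C where C: "C \<subseteq> S" "facets \<tau> = boundary C" by (rule boundary_spanE)
  have "\<exists>\<sigma>\<in>C. facets \<sigma> \<notin> boundary_span (S' - {\<tau>})"
  proof (rule ccontr)
    assume "\<not> ?thesis"
    then have "boundary C \<in> boundary_span (S' - {\<tau>})"
      using fin C(1) by (intro boundary_in_boundary_span) (auto intro: finite_subset)
    then show False
      using facets_notin_boundary_span_remove[OF S1(2) fin(2) \<tau>(1)] C(2) by simp
  qed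
  then obtain \<sigma> where \<sigma>: "\<sigma> \<in> C" "facets \<sigma> \<notin> boundary_span (S' - {\<tau>})" by blast
  have "\<sigma> \<in> S" "\<sigma> \<in> E" "\<sigma> \<notin> S'"
    using \<sigma> C(1) S0(1) \<tau> facets_in_boundary_span[of \<sigma> "S' - {\<tau>}"] by auto
  have "facets \<tau> \<notin> boundary_span (S - {\<sigma>})"
  proof
    assume "facets \<tau> \<in> boundary_span (S - {\<sigma>})"
    then obtain B where B: "B \<subseteq> S - {\<sigma>}" "facets \<tau> = boundary B" by (rule boundary_spanE)
    then have "B = C" using boundary_independent_inj[OF S0(2) fin(1), of B C] C by auto
    then show False using B(1) \<sigma>(1) by auto
  qed
  then show thesis
    using that[OF \<open>\<sigma> \<in> S\<close> \<open>\<sigma> \<notin> S'\<close>] E(2) \<sigma>(2) \<open>\<sigma> \<in> E\<close> \<open>\<tau> \<in> E\<close>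
      boundary_basis_exchange[OF E(1) S(2) \<tau>(1) \<open>\<sigma> \<in> E\<close> \<open>\<sigma> \<notin> S'\<close>]
      boundary_basis_exchange[OF E(1) S(1) \<open>\<sigma> \<in> S\<close> \<open>\<tau> \<in> E\<close> \<tau>(2)] by blast
qed

lemma exchange_optimal_sum_less:
  fixes w :: "'x set \<Rightarrow> 'w::ordered_cancel_comm_monoid_add"
  assumes E: "finite E" "\<forall>\<sigma>\<in>E. facets \<sigma> \<in> Z"
    and S: "boundary_basis E Z S" "exchange_optimal E Z R S"
    and w: "\<forall>s\<in>E. \<forall>t\<in>E. R s t \<longrightarrow> w s < w t"
  shows "boundary_basis E Z S' \<Longrightarrow> S' \<noteq> S \<Longrightarrow> sum w S < sum w S'"
proof (induction "card (S' - S)" arbitrary: S' rule: less_induct)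
  case less
  have "S \<subseteq> E" "S' \<subseteq> E" using S(1) less.prems(1) unfolding boundary_basis_def by auto
  then have "finite S'" using E(1) finite_subset by auto
  obtain \<tau> where \<tau>: "\<tau> \<in> S'" "\<tau> \<notin> S"
    using boundary_basis_subset_eq[OF E S(1) less.prems(1)] less.prems(2) by blast
  then obtain \<sigma> where \<sigma>: "\<sigma> \<in> S" "\<sigma> \<notin> S'"
    and basis': "boundary_basis E Z (insert \<sigma> (S' - {\<tau>}))"
    and "boundary_basis E Z (insert \<tau> (S - {\<sigma>}))"
    using boundary_basis_symmetric_exchange[OF E S(1) less.prems(1)] by blast
  then have "w \<sigma> < w \<tau>"
    using S(2) w \<tau> \<open>S \<subseteq> E\<close> \<open>S' \<subseteq> E\<close> unfolding exchange_optimal_def by blast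
  then have less: "sum w (insert \<sigma> (S' - {\<tau>})) < sum w S'"
    using \<open>finite S'\<close> \<tau>(1) \<sigma>(2) by (simp add: sum.remove add_strict_right_mono)
  have "insert \<sigma> (S' - {\<tau>}) - S = (S' - S) - {\<tau>}" using \<sigma>(1) by auto
  moreover have "card ((S' - S) - {\<tau>}) < card (S' - S)"
    using \<tau> \<open>finite S'\<close> by (intro card_Diff1_less) auto
  ultimately show ?case
    using less.hyps[OF _ basis'] less by (cases "insert \<sigma> (S' - {\<tau>}) = S") auto
qed

lemma boundary_basis_exists:
  assumes "finite E" "Z \<subseteq> boundary_span E"
  shows "\<exists>S. boundary_basis E Z S"
proof -
  let ?P = "\<lambda>S. S \<subseteq> E \<and> Z \<subseteq> boundary_span S"
  obtain S where S: "?P S" "\<And>S'. ?P S' \<Longrightarrow> card S \<le> card S'"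
    using ex_has_least_nat[of ?P E card] assms(2) by blast
  have "finite S" using S(1) assms(1) finite_subset by blast
  have "boundary_independent S"
    unfolding boundary_independent_def
  proof (intro allI impI)
    fix C assume C: "C \<subseteq> S" "boundary C = {}"
    show "C = {}"
    proof (rule ccontr)
      assume "C \<noteq> {}"
      then obtain \<sigma> where "\<sigma> \<in> C" by blast
      have "finite C" using C(1) \<open>finite S\<close> finite_subset by blast
      then have "facets \<sigma> = boundary (C - {\<sigma>})"
        using boundary_remove[OF _ \<open>\<sigma> \<in> C\<close>] C(2) by auto
      then have "facets \<sigma> \<in> boundary_span (S - {\<sigma>})"
        using C(1) by (intro boundary_spanI[of "C - {\<sigma>}"]) auto
      then have "boundary_span (insert \<sigma> (S - {\<sigma>})) = boundary_span (S - {\<sigma>})"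
        using \<open>finite S\<close> by (intro boundary_span_insert) auto
      moreover have "insert \<sigma> (S - {\<sigma>}) = S" using \<open>\<sigma> \<in> C\<close> C(1) by blast
      ultimately have "?P (S - {\<sigma>})" using S(1) by auto
      then have "card S \<le> card (S - {\<sigma>})" by (rule S(2))
      moreover have "card (S - {\<sigma>}) < card S"
        using \<open>finite S\<close> \<open>\<sigma> \<in> C\<close> C(1) by (intro card_Diff1_less) auto
      ultimately show False by simp
    qed
  qed
  then show ?thesis using S(1) unfolding boundary_basis_def by blast
qed

lemma card_predecessors_less:
  assumes "finite E" "strict_total_on E R" "s \<in> E" "t \<in> E" "R s t"
  shows "card {u\<in>E. R u s} < card {u\<in>E. R u t}"
proof (rule psubset_card_mono)
  note st = strict_total_onD[OF assms(2)]
  show "finite {u\<in>E. R u t}" using assms(1) by simp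
  have "{u\<in>E. R u s} \<subseteq> {u\<in>E. R u t}" using st(2)[OF _ assms(3,4) _ assms(5)] by blast
  moreover have "s \<in> {u\<in>E. R u t}" "s \<notin> {u\<in>E. R u s}" using assms(3,5) st(1) by auto
  ultimately show "{u\<in>E. R u s} \<subset> {u\<in>E. R u t}" by blast
qed

lemma exchange_optimal_exists:
  assumes "finite E" "Z \<subseteq> boundary_span E" "strict_total_on E R"
  obtains S where "boundary_basis E Z S" "exchange_optimal E Z R S"
proof -
  define n where "n \<sigma> = card {u\<in>E. R u \<sigma>}" for \<sigma>
  obtain S1 where "boundary_basis E Z S1" using boundary_basis_exists[OF assms(1,2)] by blast
  then obtain S where S: "boundary_basis E Z S" "\<And>S'. boundary_basis E Z S' \<Longrightarrow> sum n S \<le> sum n S'"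
    using ex_has_least_nat[of "boundary_basis E Z" S1 "sum n"] by blast
  have "finite S" "S \<subseteq> E" using S(1) assms(1) finite_subset unfolding boundary_basis_def by auto
  have "exchange_optimal E Z R S" unfolding exchange_optimal_def
  proof (intro ballI impI)
    fix \<sigma> \<tau> assume \<sigma>: "\<sigma> \<in> S" and \<tau>: "\<tau> \<in> E - S"
      and basis: "boundary_basis E Z (insert \<tau> (S - {\<sigma>}))"
    have "n \<sigma> + sum n (S - {\<sigma>}) = sum n S" using \<open>finite S\<close> \<sigma> by (simp add: sum.remove)
    also have "\<dots> \<le> sum n (insert \<tau> (S - {\<sigma>}))" by (rule S(2)[OF basis])
    also have "\<dots> = n \<tau> + sum n (S - {\<sigma>})" using \<open>finite S\<close> \<tau> by simp
    finally have "n \<sigma> \<le> n \<tau>" by simp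
    moreover have "\<sigma> \<noteq> \<tau>" "\<sigma> \<in> E" using \<sigma> \<tau> \<open>S \<subseteq> E\<close> by auto
    ultimately show "R \<sigma> \<tau>"
      using strict_total_onD(3)[OF assms(3), of \<sigma> \<tau>] card_predecessors_less[OF assms(1,3), of \<tau> \<sigma>] \<tau>
      unfolding n_def by fastforce
  qed
  then show thesis using that S(1) by blast
qed

lemma simplices_of_dim_skeleton_Un:
  assumes "S \<subseteq> simplices_of_dim K k" "1 \<le> k"
  shows "simplices_of_dim (skeleton K (k - 1) \<union> S) k = S"
    and "simplices_of_dim (skeleton K (k - 1) \<union> S) (Suc k) = {}"
    and "simplices_of_dim (skeleton K (k - 1) \<union> S) (k - 1) = simplices_of_dim K (k - 1)"
  using assms unfolding simplices_of_dim_def skeleton_def by auto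

lemma reduced_betti_zero_top_iff:
  assumes "S \<subseteq> simplices_of_dim K k" "1 \<le> k" "finite S"
  shows "reduced_betti_zero (skeleton K (k - 1) \<union> S) k \<longleftrightarrow> boundary_independent S"
proof -
  let ?L = "skeleton K (k - 1) \<union> S"
  note L = simplices_of_dim_skeleton_Un[OF assms(1,2)]
  have "(\<exists>D. finite D \<and> D \<subseteq> {} \<and> boundary D = C) \<longleftrightarrow> C = {}" for C :: "'a set set"
    by auto
  then have "reduced_betti_zero ?L k \<longleftrightarrow> (\<forall>C\<in>cycles ?L k. C = {})"
    unfolding reduced_betti_zero_iff L(2) by simp
  also have "\<dots> \<longleftrightarrow> boundary_independent S"
    unfolding boundary_independent_def
  proof (intro iffI allI impI ballI)
    fix C assume "\<forall>C\<in>cycles ?L k. C = {}" "C \<subseteq> S" "boundary C = {}"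
    then show "C = {}" using rev_finite_subset[OF assms(3)] unfolding cycles_def L(1) by blast
  next
    fix C assume "\<forall>C\<subseteq>S. boundary C = {} \<longrightarrow> C = {}" "C \<in> cycles ?L k"
    then show "C = {}" unfolding cycles_def L(1) by blast
  qed
  finally show ?thesis .
qed

lemma reduced_betti_zero_below_iff:
  assumes "S \<subseteq> simplices_of_dim K k" "1 \<le> k" "finite S"
  shows "reduced_betti_zero (skeleton K (k - 1) \<union> S) (k - 1) \<longleftrightarrow>
    cycles K (k - 1) \<subseteq> boundary_span S"
proof -
  let ?L = "skeleton K (k - 1) \<union> S"
  note L = simplices_of_dim_skeleton_Un[OF assms(1,2)]
  have "cycles ?L (k - 1) = cycles K (k - 1)" unfolding cycles_def L(3) ..
  moreover have "Suc (k - 1) = k" using assms(2) by simp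
  ultimately have "reduced_betti_zero ?L (k - 1) \<longleftrightarrow>
      (\<forall>C\<in>cycles K (k - 1). \<exists>D. finite D \<and> D \<subseteq> S \<and> boundary D = C)"
    unfolding reduced_betti_zero_iff by (simp only: L(1))
  also have "\<dots> \<longleftrightarrow> cycles K (k - 1) \<subseteq> boundary_span S"
  proof (intro iffI subsetI ballI)
    fix C assume "\<forall>C\<in>cycles K (k - 1). \<exists>D. finite D \<and> D \<subseteq> S \<and> boundary D = C"
      and "C \<in> cycles K (k - 1)"
    then obtain D where "D \<subseteq> S" "boundary D = C" by blast
    then show "C \<in> boundary_span S" by (intro boundary_spanI[of D]) auto
  next
    fix C assume "cycles K (k - 1) \<subseteq> boundary_span S" and "C \<in> cycles K (k - 1)"
    then have "C \<in> boundary_span S" by blast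
    then obtain D where "D \<subseteq> S" "C = boundary D" by (rule boundary_spanE)
    then show "\<exists>D. finite D \<and> D \<subseteq> S \<and> boundary D = C"
      using rev_finite_subset[OF assms(3)] by blast
  qed
  finally show ?thesis .
qed

lemma spanning_acycle_iff_boundary_basis:
  assumes "finite X" "1 \<le> k"
  shows "spanning_acycle X k S \<longleftrightarrow>
    boundary_basis (simplices_of_dim (DEL X) k) (cycles (DEL X) (k - 1)) S"
proof (cases "S \<subseteq> simplices_of_dim (DEL X) k")
  case True
  then have "finite S" using finite_simplices_of_dim_DEL[OF assms(1)] by (rule finite_subset)
  then show ?thesis
    using True reduced_betti_zero_top_iff[OF True assms(2)] reduced_betti_zero_below_iff[OF True assms(2)]
    unfolding spanning_acycle_def boundary_basis_def Let_def by blast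
qed (simp add: spanning_acycle_def boundary_basis_def)

lemma facets_in_cycles:
  assumes "\<sigma> \<in> simplices_of_dim (DEL X) k" "1 \<le> k"
  shows "facets \<sigma> \<in> cycles (DEL X) (k - 1)"
proof -
  have "\<sigma> \<in> simplices_of_dim (DEL X) (Suc (k - 1))" using assms by simp
  then show ?thesis
    using facets_simplices_of_dim_DEL simplex_of_dim_finite[OF assms(1)] unfolding cycles_def by simp
qed

lemma cycles_DEL_subset_boundary_span:
  assumes "finite X" "1 \<le> k"
  shows "cycles (DEL X) (k - 1) \<subseteq> boundary_span (simplices_of_dim (DEL X) k)"
proof
  fix C assume "C \<in> cycles (DEL X) (k - 1)"
  then obtain D where "D \<subseteq> simplices_of_dim (DEL X) (Suc (k - 1))" "boundary D = C"
    using DEL_acyclic[OF assms(1)] unfolding reduced_betti_zero_iff by blast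
  then show "C \<in> boundary_span (simplices_of_dim (DEL X) k)"
    using assms(2) by (intro boundary_spanI[of D]) auto
qed

lemma MSA_eq_exchange_optimal:
  assumes X: "finite X" "inj_on \<iota> X" "1 \<le> k"
    and S: "boundary_basis (simplices_of_dim (DEL X) k) (cycles (DEL X) (k - 1)) S"
      "exchange_optimal (simplices_of_dim (DEL X) k) (cycles (DEL X) (k - 1)) (prec \<iota> k) S"
  shows "MSA \<iota> X k = S"
  unfolding MSA_def
proof (rule the_equality)
  let ?E = "simplices_of_dim (DEL X) k"
  have E: "finite ?E" "\<forall>\<sigma>\<in>?E. facets \<sigma> \<in> cycles (DEL X) (k - 1)"
    using finite_simplices_of_dim_DEL[OF X(1)] facets_in_cycles X(3) by auto
  note sa = spanning_acycle_iff_boundary_basis[OF X(1,3)]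
  note less = exchange_optimal_sum_less[OF E S]
  show "is_MSA \<iota> X k S"
    unfolding is_MSA_def
  proof (intro conjI allI impI)
    show "spanning_acycle X k S" using sa S(1) by blast
    fix w :: "'a set \<Rightarrow> real" and S'
    assume "\<forall>s\<in>?E. \<forall>t\<in>?E. prec \<iota> k s t \<longrightarrow> w s < w t" "spanning_acycle X k S'"
    then show "sum w S \<le> sum w S'" using less[of w S'] sa by (cases "S' = S") auto
  qed
  fix S' assume S': "is_MSA \<iota> X k S'"
  show "S' = S"
  proof (rule ccontr)
    assume "S' \<noteq> S"
    define n where "n \<sigma> = real (card {u\<in>?E. prec \<iota> k u \<sigma>})" for \<sigma>
    have n: "\<forall>s\<in>?E. \<forall>t\<in>?E. prec \<iota> k s t \<longrightarrow> n s < n t"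
      unfolding n_def using card_predecessors_less[OF E(1) strict_total_on_prec[OF X]] by simp
    then have "sum n S' \<le> sum n S" using S' S(1) sa unfolding is_MSA_def by blast
    moreover have "sum n S < sum n S'" using less[OF n] S' sa \<open>S' \<noteq> S\<close> unfolding is_MSA_def by blast
    ultimately show False by simp
  qed
qed

lemma MSA_exchange_optimal:
  assumes "finite X" "inj_on \<iota> X" "1 \<le> k"
  shows "boundary_basis (simplices_of_dim (DEL X) k) (cycles (DEL X) (k - 1)) (MSA \<iota> X k)"
    and "exchange_optimal (simplices_of_dim (DEL X) k) (cycles (DEL X) (k - 1)) (prec \<iota> k) (MSA \<iota> X k)"
proof -
  obtain S where "boundary_basis (simplices_of_dim (DEL X) k) (cycles (DEL X) (k - 1)) S"
    "exchange_optimal (simplices_of_dim (DEL X) k) (cycles (DEL X) (k - 1)) (prec \<iota> k) S"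
    using exchange_optimal_exists[OF finite_simplices_of_dim_DEL[OF assms(1)]
        cycles_DEL_subset_boundary_span[OF assms(1,3)] strict_total_on_prec[OF assms]] .
  with MSA_eq_exchange_optimal[OF assms this] show
    "boundary_basis (simplices_of_dim (DEL X) k) (cycles (DEL X) (k - 1)) (MSA \<iota> X k)"
    "exchange_optimal (simplices_of_dim (DEL X) k) (cycles (DEL X) (k - 1)) (prec \<iota> k) (MSA \<iota> X k)"
    by simp_all
qed

text \<open>The cycle property of optimal bases: in a dependent set \<open>F\<close> the relation
  \<open>boundary F = {}\<close> expresses \<open>facets m\<close> through the other members, one of which can replace
  \<open>m\<close> in \<open>S\<close>; hence \<open>m\<close> is not the largest member of \<open>F\<close>.\<close>
lemma exchange_optimal_not_max:
  assumes E: "finite E" "strict_total_on E R" "\<forall>\<sigma>\<in>E. facets \<sigma> \<in> Z"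
    and S: "boundary_basis E Z S" "exchange_optimal E Z R S"
    and F: "F \<subseteq> E" "finite F" "boundary F = {}" "m \<in> F" "m \<in> S"
  shows "\<exists>g\<in>F. g \<noteq> m \<and> R m g"
proof -
  have indep: "boundary_independent S" "finite S"
    using S(1) E(1) finite_subset unfolding boundary_basis_def by auto
  have "facets m = boundary (F - {m})" using boundary_remove[OF F(2,4)] F(3) by auto
  moreover have "facets m \<notin> boundary_span (S - {m})"
    by (rule facets_notin_boundary_span_remove[OF indep F(5)])
  ultimately obtain g where g: "g \<in> F - {m}" "facets g \<notin> boundary_span (S - {m})"
    using boundary_in_boundary_span[of "S - {m}" "F - {m}"] indep(2) F(2) by auto
  then have "g \<notin> S" using facets_in_boundary_span[of g "S - {m}"] by auto
  moreover have "g \<in> E" using g(1) F(1) by blast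
  ultimately have "boundary_basis E Z (insert g (S - {m}))"
    using boundary_basis_exchange[OF E(1) S(1) F(5)] E(3) g(2) by blast
  then have "R m g" using S(2) F(5) \<open>g \<in> E\<close> \<open>g \<notin> S\<close> unfolding exchange_optimal_def by blast
  then show ?thesis using g(1) by blast
qed

lemma MSA_not_maxf:
  assumes X: "finite X" "inj_on \<iota> X" "1 \<le> k"
    and \<sigma>: "\<sigma> \<in> MSA \<iota> X k" and \<tau>: "\<tau> \<in> simplices_of_dim (DEL X) (Suc k)" "\<sigma> \<in> facets \<tau>"
  shows "\<sigma> \<noteq> maxf (prec \<iota> k) \<tau>"
proof
  let ?E = "simplices_of_dim (DEL X) k" and ?R = "prec \<iota> k"
  have order: "strict_total_on ?E ?R" by (rule strict_total_on_prec[OF X])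
  have F: "facets \<tau> \<subseteq> ?E" by (rule facets_simplices_of_dim_DEL[OF \<tau>(1)])
  have fin: "finite \<tau>" "\<tau> \<noteq> {}" using \<tau>(1) simplex_of_dim_finite by (auto simp: simplices_of_dim_def)
  assume max: "\<sigma> = maxf ?R \<tau>"
  obtain g where g: "g \<in> facets \<tau>" "g \<noteq> \<sigma>" "?R \<sigma> g"
    using exchange_optimal_not_max[OF finite_simplices_of_dim_DEL[OF X(1)] order _
        MSA_exchange_optimal[OF X] F finite_facets[OF fin(1)] boundary_facets[OF fin(1)] \<tau>(2) \<sigma>]
      facets_in_cycles X(3) by blast
  moreover have "?R g \<sigma>"
    using maxf_facets(2)[OF fin strict_total_on_subset[OF order F] g(1)] g(2) max by simp
  ultimately show False using strict_total_onD(4)[OF order] F \<tau>(2) by blast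
qed

theorem lemma2:
  fixes X :: "'a::euclidean_space set" and \<iota> :: "'a \<Rightarrow> nat" and k :: nat
  assumes "finite X" and "general_position X" and "inj_on \<iota> X"
    and "1 \<le> k" and "k < DIM('a)"
  shows "MSA \<iota> X k \<subseteq> USC \<iota> X k"
proof
  let ?E = "simplices_of_dim (DEL X) k" and ?R = "prec \<iota> k"
  fix \<sigma> assume \<sigma>: "\<sigma> \<in> MSA \<iota> X k"
  then have "\<sigma> \<in> ?E" using MSA_exchange_optimal(1)[OF assms(1,3,4)] unfolding boundary_basis_def by blast
  have "?R \<sigma> (maxf ?R \<tau>)" if \<tau>: "\<tau> \<in> simplices_of_dim (DEL X) (Suc k)" "\<sigma> \<subset> \<tau>" for \<tau>
  proof -
    have fin: "finite \<tau>" "\<tau> \<noteq> {}" using \<tau>(1) simplex_of_dim_finite by (auto simp: simplices_of_dim_def)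
    have "\<sigma> \<in> facets \<tau>"
      using \<tau> \<open>\<sigma> \<in> ?E\<close> fin(1) unfolding simplices_of_dim_def by (intro facet_of_card) auto
    moreover have "strict_total_on (facets \<tau>) ?R"
      using strict_total_on_subset[OF strict_total_on_prec[OF assms(1,3,4)]]
        facets_simplices_of_dim_DEL[OF \<tau>(1)] .
    ultimately show ?thesis
      using maxf_facets(2)[OF fin] MSA_not_maxf[OF assms(1,3,4) \<sigma> \<tau>(1)] by blast
  qed
  then show "\<sigma> \<in> USC \<iota> X k" using \<open>\<sigma> \<in> ?E\<close> unfolding USC_def by blast
qed

end
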